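(* Let $T=-T_{\mathfrak p}Q|_{\mathfrak p}+T_1Q|_{\mathfrak k_1}+\cdots+T_{r+s}Q|_{\mathfrak k_{r+s}}$ be a left-invariant $(0,2)$-tensor field on $G$ with $T_{\mathfrak p},T_1,\dots,T_{r+s}>0$. If $$\sum_{i=1}^{r+s}\frac{n^2\kappa_iT_{\mathfrak p}^2-d_i^2(1-\kappa_i)T_i^2}{nT_{\mathfrak p}T_i}-2n<0,$$ then the functional $S|_{\mathcal M_T^-}$ attains its global maximum.
   Context: Let $G$ be a connected non-compact simple Lie group with Lie algebra $\mathfrak g$, $K$ a maximal compact subgroup with Lie algebra $\mathfrak k$, $B$ the Killing form of $\mathfrak g$, and $\mathfrak p$ the $B$-orthogonal complement of $\mathfrak k$ in $\mathfrak g$. Let $Q=B|_{\mathfrak p}-B|_{\mathfrak k}$. Write $\mathfrak k=\mathfrak k_1\oplus\cdots\oplus\mathfrak k_{r+s}$, where $\mathfrak k_1,\dots,\mathfrak k_r$ are the simple ideals of $[\mathfrak k,\mathfrak k]$, $\mathfrak k_{r+1}$ is the centre of $\mathfrak k$, and $s=1$ if the centre is nontrivial, $s=0$ otherwise. Let $n=\dim\mathfrak p$, $d_i=\dim\mathfrak k_i$, and define $\kappa_i$ by $B_i=\kappa_iB|_{\mathfrak k_i}$, $B_i$ the Killing form of $\mathfrak k_i$. Left-invariant tensor fields on $G$ are identified with bilinear forms on $\mathfrak g$; $Q|_{\mathfrak u}$ denotes $Q$ restricted to $\mathfrak u$ and extended by zero on its $Q$-orthogonal complement. $\mathcal M_K$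 is the set of left-invariant metrics on $G$ naturally reductive with respect to $G\times K$ (acting by $(x,k)y=xyk^{-1}$), which by a theorem of Gordon are exactly the metrics $\beta Q|_{\mathfrak p}+\sum_i\alpha_iQ|_{\mathfrak k_i}$ with $\beta,\alpha_i>0$. $S$ is the scalar curvature functional, and $\mathcal M_T^-=\{g\in\mathcal M_K:\mathrm{tr}_gT=-1\}$. *)

theory Defs
  imports "HOL-Analysis.Analysis"
begin

text \<open>A finite-dimensional real Lie algebra is modelled on a euclidean space type 'g
  (the inner product is used only to compute traces of endomorphisms).\<close>

definition lie_algebra :: "('g::euclidean_space \<Rightarrow> 'g \<Rightarrow> 'g) \<Rightarrow> bool" where
  "lie_algebra br \<longleftrightarrow> (\<forall>x. linear (br x)) \<and> (\<forall>y. linear (\<lambda>x. br x y))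
     \<and> (\<forall>x y. br x y = - br y x)
     \<and> (\<forall>x y z. br x (br y z) + br y (br z x) + br z (br x y) = 0)"

definition trace_end :: "('g::euclidean_space \<Rightarrow> 'g) \<Rightarrow> real" where
  "trace_end f = (\<Sum>b\<in>Basis. f b \<bullet> b)"

definition killing :: "('g::euclidean_space \<Rightarrow> 'g \<Rightarrow> 'g) \<Rightarrow> 'g \<Rightarrow> 'g \<Rightarrow> real" where
  "killing br x y = trace_end (\<lambda>v. br x (br y v))"

definition lie_ideal_of :: "('g::euclidean_space \<Rightarrow> 'g \<Rightarrow> 'g) \<Rightarrow> 'g set \<Rightarrow> 'g set \<Rightarrow> bool" where
  "lie_ideal_of br h I \<longleftrightarrow> subspace I \<and> I \<subseteq> h \<and> (\<forall>x\<in>h. \<forall>y\<in>I. br x y \<in> I)"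

definition simple_lie :: "('g::euclidean_space \<Rightarrow> 'g \<Rightarrow> 'g) \<Rightarrow> 'g set \<Rightarrow> bool" where
  "simple_lie br I \<longleftrightarrow> (\<exists>x\<in>I. \<exists>y\<in>I. br x y \<noteq> 0)
     \<and> (\<forall>J. lie_ideal_of br I J \<longrightarrow> J = {0} \<or> J = I)"

definition noncompact_lie :: "('g::euclidean_space \<Rightarrow> 'g \<Rightarrow> 'g) \<Rightarrow> bool" where
  "noncompact_lie br \<longleftrightarrow> \<not> (\<forall>x. x \<noteq> 0 \<longrightarrow> killing br x x < 0)"

definition derived :: "('g::euclidean_space \<Rightarrow> 'g \<Rightarrow> 'g) \<Rightarrow> 'g set \<Rightarrow> 'g set" where
  "derived br h = span {br x y | x y. x \<in> h \<and> y \<in> h}"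

definition centre :: "('g::euclidean_space \<Rightarrow> 'g \<Rightarrow> 'g) \<Rightarrow> 'g set \<Rightarrow> 'g set" where
  "centre br h = {x \<in> h. \<forall>y\<in>h. br x y = 0}"

definition kperp :: "('g::euclidean_space \<Rightarrow> 'g \<Rightarrow> 'g) \<Rightarrow> 'g set \<Rightarrow> 'g set" where
  "kperp br k = {x. \<forall>y\<in>k. killing br x y = 0}"

text \<open>k is the Lie algebra of a maximal compact subgroup: the k-part of a Cartan decomposition.\<close>
definition cartan_subalg :: "('g::euclidean_space \<Rightarrow> 'g \<Rightarrow> 'g) \<Rightarrow> 'g set \<Rightarrow> bool" where
  "cartan_subalg br k \<longleftrightarrow> subspace k \<and> (\<forall>x\<in>k. \<forall>y\<in>k. br x y \<in> k)
     \<and> (\<forall>x\<in>k. x \<noteq> 0 \<longrightarrow> killing br x x < 0)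
     \<and> (\<forall>x\<in>kperp br k. \<forall>y\<in>kperp br k. br x y \<in> k)
     \<and> (\<forall>x\<in>kperp br k. x \<noteq> 0 \<longrightarrow> killing br x x > 0)"

definition projk :: "('g::euclidean_space \<Rightarrow> 'g \<Rightarrow> 'g) \<Rightarrow> 'g set \<Rightarrow> 'g \<Rightarrow> 'g" where
  "projk br k x = (THE u. u \<in> k \<and> (\<forall>w\<in>k. killing br (x - u) w = 0))"

definition Qform :: "('g::euclidean_space \<Rightarrow> 'g \<Rightarrow> 'g) \<Rightarrow> 'g set \<Rightarrow> 'g \<Rightarrow> 'g \<Rightarrow> real" where
  "Qform br k x y = killing br (x - projk br k x) (y - projk br k y)
                    - killing br (projk br k x) (projk br k y)"

definition qproj :: "('g::euclidean_space \<Rightarrow> 'g \<Rightarrow> 'g) \<Rightarrow> 'g set \<Rightarrow> 'g set \<Rightarrow> 'g \<Rightarrow> 'g" where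
  "qproj br k U x = (THE u. u \<in> U \<and> (\<forall>w\<in>U. Qform br k (x - u) w = 0))"

text \<open>Q restricted to U, extended by zero on its Q-orthogonal complement.\<close>
definition Qres :: "('g::euclidean_space \<Rightarrow> 'g \<Rightarrow> 'g) \<Rightarrow> 'g set \<Rightarrow> 'g set \<Rightarrow> 'g \<Rightarrow> 'g \<Rightarrow> real" where
  "Qres br k U x y = Qform br k (qproj br k U x) (qproj br k U y)"

text \<open>Killing form of the subalgebra U (U invariant under ad of its elements).\<close>
definition killing_on :: "('g::euclidean_space \<Rightarrow> 'g \<Rightarrow> 'g) \<Rightarrow> 'g set \<Rightarrow> 'g set \<Rightarrow> 'g \<Rightarrow> 'g \<Rightarrow> real" where
  "killing_on br k U x y = trace_end (\<lambda>v. br x (br y (qproj br k U v)))"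

definition kappa :: "('g::euclidean_space \<Rightarrow> 'g \<Rightarrow> 'g) \<Rightarrow> 'g set \<Rightarrow> 'g set \<Rightarrow> real" where
  "kappa br k U = (THE c. \<forall>x\<in>U. \<forall>y\<in>U. killing_on br k U x y = c * killing br x y)"

text \<open>ks 0, ..., ks (r-1) are the simple ideals of [k,k] (listed without repetition);
  if the centre of k is nontrivial, m = r+1 and ks r is the centre, otherwise m = r.\<close>
definition k_decomp :: "('g::euclidean_space \<Rightarrow> 'g \<Rightarrow> 'g) \<Rightarrow> 'g set \<Rightarrow> (nat \<Rightarrow> 'g set) \<Rightarrow> nat \<Rightarrow> nat \<Rightarrow> bool" where
  "k_decomp br k ks r m \<longleftrightarrow> inj_on ks {..<r}
     \<and> ks ` {..<r} = {I. lie_ideal_of br (derived br k) I \<and> simple_lie br I}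
     \<and> (if centre br k = {0} then m = r else m = Suc r \<and> ks r = centre br k)"

definition kform :: "('g::euclidean_space \<Rightarrow> 'g \<Rightarrow> 'g) \<Rightarrow> 'g set \<Rightarrow> (nat \<Rightarrow> 'g set) \<Rightarrow> nat
     \<Rightarrow> real \<Rightarrow> (nat \<Rightarrow> real) \<Rightarrow> 'g \<Rightarrow> 'g \<Rightarrow> real" where
  "kform br k ks m c0 c x y =
     c0 * Qres br k (kperp br k) x y + (\<Sum>i<m. c i * Qres br k (ks i) x y)"

definition tr_wrt :: "('g::euclidean_space \<Rightarrow> 'g \<Rightarrow> real) \<Rightarrow> ('g \<Rightarrow> 'g \<Rightarrow> real) \<Rightarrow> real" where
  "tr_wrt g T = trace_end (\<lambda>x. THE z. \<forall>w. g z w = T x w)"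

text \<open>Curvature of the left-invariant metric g (a bilinear form on the Lie algebra).\<close>
definition adj :: "('g::euclidean_space \<Rightarrow> 'g \<Rightarrow> real) \<Rightarrow> ('g \<Rightarrow> 'g \<Rightarrow> 'g) \<Rightarrow> 'g \<Rightarrow> 'g \<Rightarrow> 'g" where
  "adj g br x y = (THE z. \<forall>w. g z w = g y (br x w))"

definition levi_civita :: "('g::euclidean_space \<Rightarrow> 'g \<Rightarrow> real) \<Rightarrow> ('g \<Rightarrow> 'g \<Rightarrow> 'g) \<Rightarrow> 'g \<Rightarrow> 'g \<Rightarrow> 'g" where
  "levi_civita g br x y = (1/2) *\<^sub>R (br x y - adj g br x y - adj g br y x)"

definition curv :: "('g::euclidean_space \<Rightarrow> 'g \<Rightarrow> real) \<Rightarrow> ('g \<Rightarrow> 'g \<Rightarrow> 'g) \<Rightarrow> 'g \<Rightarrow> 'g \<Rightarrow> 'g \<Rightarrow> 'g" where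
  "curv g br x y z = levi_civita g br x (levi_civita g br y z) - levi_civita g br y (levi_civita g br x z)
     - levi_civita g br (br x y) z"

definition ricci :: "('g::euclidean_space \<Rightarrow> 'g \<Rightarrow> real) \<Rightarrow> ('g \<Rightarrow> 'g \<Rightarrow> 'g) \<Rightarrow> 'g \<Rightarrow> 'g \<Rightarrow> real" where
  "ricci g br y z = trace_end (\<lambda>x. curv g br x y z)"

definition scal :: "('g::euclidean_space \<Rightarrow> 'g \<Rightarrow> real) \<Rightarrow> ('g \<Rightarrow> 'g \<Rightarrow> 'g) \<Rightarrow> real" where
  "scal g br = tr_wrt g (ricci g br)"

text \<open>M_K (via Gordon's description) and M_T^-.\<close>
definition MK :: "('g::euclidean_space \<Rightarrow> 'g \<Rightarrow> 'g) \<Rightarrow> 'g set \<Rightarrow> (nat \<Rightarrow> 'g set) \<Rightarrow> nat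
     \<Rightarrow> ('g \<Rightarrow> 'g \<Rightarrow> real) set" where
  "MK br k ks m = {kform br k ks m \<beta> \<alpha> | \<beta> \<alpha>. \<beta> > 0 \<and> (\<forall>i<m. \<alpha> i > 0)}"

definition MTminus :: "('g::euclidean_space \<Rightarrow> 'g \<Rightarrow> 'g) \<Rightarrow> 'g set \<Rightarrow> (nat \<Rightarrow> 'g set) \<Rightarrow> nat
     \<Rightarrow> ('g \<Rightarrow> 'g \<Rightarrow> real) \<Rightarrow> ('g \<Rightarrow> 'g \<Rightarrow> real) set" where
  "MTminus br k ks m T = {g \<in> MK br k ks m. tr_wrt g T = -1}"

end

theory Submission
  imports Defs
begin

(* Every metric in M_K is diagonal in a Q-orthonormal basis adapted to
   g = k_1 + ... + k_m + p.  For a diagonal left-invariant metric the scalar curvature is a sum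
   of squared structure constants Q([a,b],d)^2 weighted by rational functions of the
   eigenvalues.  The relations [k_i,k_j] = 0 (i ~= j), [k,p] in p, [p,p] in k and the fact that
   ad x is Q-skew for x in k and Q-symmetric for x in p leave four kinds of terms, and their
   sums are computed from Killing forms: each row of structure constants has length one, and by
   Schur's lemma B_i = kappa_i B on k_i.  This gives
     S(beta, alpha) = sum_i kappa_i d_i/(4 alpha_i) - (1 - kappa_i) d_i alpha_i/(4 beta^2)
                      - (1 - kappa_i) d_i/beta,
   with sum_i (1 - kappa_i) d_i = n/2.  The trace condition -T_p n/beta + sum_i T_i d_i/alpha_i = -1
   determines beta in terms of w_i = 1/alpha_i, and the hypothesis of the theorem makes the
   resulting function of w tend to -infinity at the boundary of the positive orthant and at
   infinity, so it attains its maximum on a compact box. *)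

section \<open>Traces and orthonormal bases for a bilinear form\<close>

lemma trace_end_add: "trace_end (\<lambda>v. f v + h v) = trace_end f + trace_end h"
  by (simp add: trace_end_def inner_add_left sum.distrib)

lemma trace_end_diff: "trace_end (\<lambda>v. f v - h v) = trace_end f - trace_end h"
  by (simp add: trace_end_def inner_diff_left sum_subtractf)

lemma trace_end_scale: "trace_end (\<lambda>v. c *\<^sub>R f v) = c * trace_end f"
  by (simp add: trace_end_def sum_distrib_left)

lemma trace_end_comp_expand:
  assumes "linear f"
  shows "trace_end (\<lambda>v. f (h v)) = (\<Sum>b\<in>Basis. \<Sum>c\<in>Basis. (h b \<bullet> c) * (f c \<bullet> b))"
proof -
  have "f (h b) = (\<Sum>c\<in>Basis. (h b \<bullet> c) *\<^sub>R f c)" for b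
  proof -
    have "f (h b) = f (\<Sum>c\<in>Basis. (h b \<bullet> c) *\<^sub>R c)" by (simp add: euclidean_representation)
    also have "\<dots> = (\<Sum>c\<in>Basis. (h b \<bullet> c) *\<^sub>R f c)"
      by (simp add: linear_sum[OF assms] linear_scale[OF assms])
    finally show ?thesis .
  qed
  then show ?thesis by (simp add: trace_end_def inner_sum_left)
qed

lemma trace_end_comp_commute:
  assumes "linear f" "linear h"
  shows "trace_end (\<lambda>v. f (h v)) = trace_end (\<lambda>v. h (f v))"
  unfolding trace_end_comp_expand[OF assms(1)] trace_end_comp_expand[OF assms(2)]
  by (subst sum.swap) (simp add: mult.commute)

definition form_onb :: "('g::euclidean_space \<Rightarrow> 'g \<Rightarrow> real) \<Rightarrow> 'g set \<Rightarrow> 'g set \<Rightarrow> bool" where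
  "form_onb F U S \<longleftrightarrow> finite S \<and> S \<subseteq> U \<and> (\<forall>a\<in>S. \<forall>b\<in>S. F a b = (if a = b then 1 else 0))
     \<and> (\<forall>x\<in>U. x = (\<Sum>a\<in>S. F x a *\<^sub>R a))"

lemma trace_end_form_onb:
  fixes F :: "'g::euclidean_space \<Rightarrow> 'g \<Rightarrow> real"
  assumes S: "form_onb F UNIV S" and f: "linear f" and F: "\<And>y. linear (\<lambda>x. F x y)"
  shows "trace_end f = (\<Sum>a\<in>S. F (f a) a)"
proof -
  have rep: "x = (\<Sum>a\<in>S. F x a *\<^sub>R a)" for x using S by (simp add: form_onb_def)
  have lin: "linear (\<lambda>x. F (f x) a)" for a
    using linear_compose[OF f F[of a]] by (simp add: o_def)
  have "trace_end f = (\<Sum>b\<in>Basis. (\<Sum>a\<in>S. F (f b) a *\<^sub>R a) \<bullet> b)"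
    unfolding trace_end_def by (metis rep)
  also have "\<dots> = (\<Sum>a\<in>S. \<Sum>b\<in>Basis. (a \<bullet> b) * F (f b) a)"
    by (simp add: inner_sum_left sum.swap[of _ Basis] mult.commute)
  also have "\<dots> = (\<Sum>a\<in>S. F (f a) a)"
  proof (rule sum.cong[OF refl])
    fix a
    have "F (f a) a = F (f (\<Sum>b\<in>Basis. (a \<bullet> b) *\<^sub>R b)) a" by (simp add: euclidean_representation)
    also have "\<dots> = (\<Sum>b\<in>Basis. F (f ((a \<bullet> b) *\<^sub>R b)) a)"
      by (rule linear_sum[OF lin])
    also have "\<dots> = (\<Sum>b\<in>Basis. (a \<bullet> b) * F (f b) a)"
      using linear_scale[OF lin[of a]] by simp
    finally show "(\<Sum>b\<in>Basis. (a \<bullet> b) * F (f b) a) = F (f a) a" by simp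
  qed
  finally show ?thesis .
qed

lemma form_onb_coeff:
  assumes "form_onb F U S" "bilinear F" "b \<in> S"
  shows "F (\<Sum>a\<in>S. c a *\<^sub>R a) b = c b"
proof -
  have lin: "linear (\<lambda>x. F x b)" using assms(2) by (simp add: bilinear_def)
  have "F (\<Sum>a\<in>S. c a *\<^sub>R a) b = (\<Sum>a\<in>S. c a * F a b)"
    by (simp add: linear_sum[OF lin] bilinear_lmul[OF assms(2)])
  also have "\<dots> = (\<Sum>a\<in>S. if a = b then c a else 0)"
    using assms(1,3) by (intro sum.cong) (auto simp: form_onb_def)
  also have "\<dots> = c b" using assms(1,3) by (simp add: form_onb_def)
  finally show ?thesis .
qed

lemma form_onb_proj:
  fixes F :: "'g::euclidean_space \<Rightarrow> 'g \<Rightarrow> real"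
  assumes S: "form_onb F U S" and bil: "bilinear F" and sub: "subspace U"
  shows "(\<Sum>a\<in>S. F x a *\<^sub>R a) \<in> U" "\<forall>w\<in>U. F (x - (\<Sum>a\<in>S. F x a *\<^sub>R a)) w = 0"
proof -
  show "(\<Sum>a\<in>S. F x a *\<^sub>R a) \<in> U"
    using S sub by (intro subspace_sum) (auto intro: subspace_scale simp: form_onb_def)
  show "\<forall>w\<in>U. F (x - (\<Sum>a\<in>S. F x a *\<^sub>R a)) w = 0"
  proof
    fix w assume w: "w \<in> U"
    define z where "z = x - (\<Sum>a\<in>S. F x a *\<^sub>R a)"
    have zb: "F z b = 0" if "b \<in> S" for b
      using form_onb_coeff[OF S bil that, of "\<lambda>a. F x a"] by (simp add: z_def bilinear_lsub[OF bil])
    have lin: "linear (F z)" using bil by (simp add: bilinear_def)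
    have "F z w = F z (\<Sum>b\<in>S. F w b *\<^sub>R b)" using S w by (metis form_onb_def)
    also have "\<dots> = 0" using zb by (simp add: linear_sum[OF lin] bilinear_rmul[OF bil])
    finally show "F (x - (\<Sum>a\<in>S. F x a *\<^sub>R a)) w = 0" by (simp add: z_def)
  qed
qed

lemma form_proj_unique:
  fixes F :: "'g::euclidean_space \<Rightarrow> 'g \<Rightarrow> real"
  assumes sub: "subspace U" and bil: "bilinear F" and nondeg: "\<forall>x\<in>U. x \<noteq> 0 \<longrightarrow> F x x \<noteq> 0"
    and u: "u \<in> U" "\<forall>w\<in>U. F (x - u) w = 0" and u': "u' \<in> U" "\<forall>w\<in>U. F (x - u') w = 0"
  shows "u = u'"
proof -
  have d: "u' - u \<in> U" using u u' sub by (simp add: subspace_diff)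
  have "F (u' - u) (u' - u) = F (x - u) (u' - u) - F (x - u') (u' - u)"
    by (simp add: bilinear_lsub[OF bil])
  also have "\<dots> = 0" using u u' d by simp
  finally show ?thesis using nondeg d by force
qed

lemma form_onb_insert:
  fixes F :: "'g::euclidean_space \<Rightarrow> 'g \<Rightarrow> real"
  assumes bil: "bilinear F" and sub: "subspace U" and sym: "\<forall>x\<in>U. \<forall>y\<in>U. F x y = F y x"
    and e: "e \<in> U" "F e e = 1" and S: "form_onb F {y\<in>U. F e y = 0} S"
  shows "form_onb F U (insert e S)"
proof -
  have SU: "S \<subseteq> U" and orth: "\<And>a. a \<in> S \<Longrightarrow> F e a = 0" "\<And>a. a \<in> S \<Longrightarrow> F a e = 0"
    and onS: "\<And>a b. a \<in> S \<Longrightarrow> b \<in> S \<Longrightarrow> F a b = (if a = b then 1 else 0)"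
    using S sym e(1) by (auto simp: form_onb_def)
  have eS: "e \<notin> S" using orth(1) e(2) by force
  have rep: "y = (\<Sum>a\<in>insert e S. F y a *\<^sub>R a)" if y: "y \<in> U" for y
  proof -
    define y' where "y' = y - F y e *\<^sub>R e"
    have "F e y' = 0"
      using sym y e by (simp add: y'_def bilinear_rsub[OF bil] bilinear_rmul[OF bil])
    then have "y' = (\<Sum>a\<in>S. F y' a *\<^sub>R a)"
      using S y e(1) sub by (simp add: form_onb_def y'_def subspace_diff subspace_scale)
    also have "\<dots> = (\<Sum>a\<in>S. F y a *\<^sub>R a)"
      using orth(1) by (intro sum.cong) (simp_all add: y'_def bilinear_lsub[OF bil] bilinear_lmul[OF bil])
    finally show ?thesis using S eS by (simp add: form_onb_def y'_def algebra_simps)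
  qed
  show ?thesis
    unfolding form_onb_def
  proof (intro conjI ballI)
    show "finite (insert e S)" "insert e S \<subseteq> U" using S SU e by (auto simp: form_onb_def)
  next
    fix a b assume "a \<in> insert e S" "b \<in> insert e S"
    then show "F a b = (if a = b then 1 else 0)"
      using e(2) orth onS eS by (cases "a = e"; cases "b = e") auto
  qed (rule rep)
qed

lemma form_onb_card:
  fixes F :: "'g::euclidean_space \<Rightarrow> 'g \<Rightarrow> real"
  assumes S: "form_onb F U S" and bil: "bilinear F"
  shows "card S = dim U"
proof (rule dim_unique[symmetric])
  show "S \<subseteq> U" using S by (simp add: form_onb_def)
  show "U \<subseteq> span S"
  proof
    fix x assume "x \<in> U"
    then have "x = (\<Sum>a\<in>S. F x a *\<^sub>R a)" using S by (simp add: form_onb_def)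
    also have "\<dots> \<in> span S" by (intro span_sum span_scale span_base)
    finally show "x \<in> span S" .
  qed
  have "c b = 0" if "(\<Sum>a\<in>S. c a *\<^sub>R a) = 0" "b \<in> S" for c b
    using form_onb_coeff[OF S bil \<open>b \<in> S\<close>, of c] that(1) by (simp add: bilinear_lzero[OF bil])
  then show "independent S" using S by (auto simp: independent_explicit form_onb_def)
qed (rule refl)

lemma form_onb_exists:
  fixes F :: "'g::euclidean_space \<Rightarrow> 'g \<Rightarrow> real"
  assumes bil: "bilinear F" and sub: "subspace U" and sym: "\<forall>x\<in>U. \<forall>y\<in>U. F x y = F y x"
    and pos: "\<forall>x\<in>U. x \<noteq> 0 \<longrightarrow> F x x > 0"
  shows "\<exists>S. form_onb F U S"
  using sub sym pos
proof (induction "dim U" arbitrary: U rule: less_induct)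
  case (less U)
  show ?case
  proof (cases "U \<subseteq> {0}")
    case True
    then show ?thesis by (intro exI[of _ "{}"]) (auto simp: form_onb_def)
  next
    case False
    then obtain x where x: "x \<in> U" "x \<noteq> 0" by auto
    define e where "e = (1 / sqrt (F x x)) *\<^sub>R x"
    have "F x x > 0" using less.prems x by auto
    then have e: "e \<in> U" "F e e = 1"
      using x less.prems(1) by (simp_all add: e_def subspace_scale bilinear_lmul[OF bil] bilinear_rmul[OF bil])
    define U' where "U' = {y\<in>U. F e y = 0}"
    have U': "subspace U'"
      unfolding U'_def using less.prems(1) linear_subspace_kernel[of "F e"] bil
      by (auto simp: bilinear_def subspace_def)
    have "U' \<subset> U" using e by (force simp: U'_def)
    then have "dim U' < dim U"
      using dim_psubset[of U' U] U' less.prems(1) by (metis span_eq_iff)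
    then obtain S where "form_onb F U' S"
      using less.hyps[of U'] U' less.prems by (auto simp: U'_def)
    then show ?thesis
      using form_onb_insert[OF bil less.prems(1,2) e] by (auto simp: U'_def)
  qed
qed

lemma form_proj_exists:
  fixes F :: "'g::euclidean_space \<Rightarrow> 'g \<Rightarrow> real"
  assumes "bilinear F" "subspace U" "\<forall>x\<in>U. \<forall>y\<in>U. F x y = F y x"
    "\<forall>x\<in>U. x \<noteq> 0 \<longrightarrow> F x x > 0"
  shows "\<exists>u\<in>U. \<forall>w\<in>U. F (x - u) w = 0"
  using form_onb_exists[OF assms] form_onb_proj[OF _ assms(1,2)] by blast

lemma nonpos_form_radical:
  fixes H :: "'a::real_vector \<Rightarrow> 'a \<Rightarrow> real"
  assumes H: "bilinear H" and sub: "subspace U" and sym: "\<forall>x\<in>U. \<forall>y\<in>U. H x y = H y x"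
    and nonpos: "\<forall>y\<in>U. H y y \<le> 0" and x0: "x0 \<in> U" "H x0 x0 = 0" and y: "y \<in> U"
  shows "H x0 y = 0"
proof (rule ccontr)
  define A C where "A = H x0 y" and "C = H y y"
  assume "H x0 y \<noteq> 0"
  then have "A * A > 0" by (metis A_def not_real_square_gt_zero)
  define D where "D = \<bar>C\<bar> + 1"
  have D: "D > 0" by (simp add: D_def)
  define t where "t = A / D"
  have "x0 + t *\<^sub>R y \<in> U" using x0 y sub by (simp add: subspace_add subspace_scale)
  then have "H (x0 + t *\<^sub>R y) (x0 + t *\<^sub>R y) \<le> 0" using nonpos by blast
  moreover have "H (x0 + t *\<^sub>R y) (x0 + t *\<^sub>R y) = 2 * t * A + t * t * C"
    using sym x0 y by (simp add: bilinear_ladd[OF H] bilinear_radd[OF H] bilinear_lmul[OF H]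
        bilinear_rmul[OF H] A_def C_def algebra_simps)
  moreover have "2 * t * A + t * t * C = A * A * (2 * D + C) / (D * D)"
    using D by (simp add: t_def field_simps)
  moreover have "2 * D + C > 0" unfolding D_def by (simp add: abs_if)
  moreover have "A * A * (2 * D + C) / (D * D) > 0" using \<open>A * A > 0\<close> D calculation(4) by simp
  ultimately show False by linarith
qed

lemma bilinear_ratio_attains_max:
  fixes h q :: "'a::euclidean_space \<Rightarrow> 'a \<Rightarrow> real"
  assumes h: "bilinear h" and q: "bilinear q" and sub: "subspace U" and x1: "x1 \<in> U" "x1 \<noteq> 0"
    and pos: "\<forall>x\<in>U. x \<noteq> 0 \<longrightarrow> q x x > 0"
  shows "\<exists>\<mu> x0. x0 \<in> U \<and> x0 \<noteq> 0 \<and> h x0 x0 = \<mu> * q x0 x0 \<and> (\<forall>y\<in>U. h y y \<le> \<mu> * q y y)"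
proof -
  define S where "S = sphere 0 1 \<inter> U"
  have "compact S" unfolding S_def by (rule compact_Int_closed[OF compact_sphere closed_subspace[OF sub]])
  moreover have "(1 / norm x1) *\<^sub>R x1 \<in> S" using x1 sub by (simp add: S_def subspace_scale)
  then have "S \<noteq> {}" by blast
  moreover have S: "x \<in> U" "x \<noteq> 0" if "x \<in> S" for x using that by (auto simp: S_def)
  then have "continuous_on S (\<lambda>x. h x x / q x x)"
    using pos bilinear_continuous_on_compose[OF continuous_on_id continuous_on_id h]
      bilinear_continuous_on_compose[OF continuous_on_id continuous_on_id q]
    by (intro continuous_on_divide) force+
  ultimately obtain x0 where x0: "x0 \<in> S" "\<forall>y\<in>S. h y y / q y y \<le> h x0 x0 / q x0 x0"
    using continuous_attains_sup by blast
  define \<mu> where "\<mu> = h x0 x0 / q x0 x0"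
  have "h y y \<le> \<mu> * q y y" if y: "y \<in> U" for y
  proof (cases "y = 0")
    case True
    then show ?thesis by (simp add: bilinear_lzero[OF h] bilinear_lzero[OF q])
  next
    case False
    define t where "t = 1 / norm y"
    have t: "t \<noteq> 0" "t *\<^sub>R y \<in> S" using y False sub by (simp_all add: S_def t_def subspace_scale)
    then have "h (t *\<^sub>R y) (t *\<^sub>R y) / q (t *\<^sub>R y) (t *\<^sub>R y) \<le> \<mu>"
      using x0 by (simp add: \<mu>_def)
    then have "h y y / q y y \<le> \<mu>" using t(1)
      by (simp add: bilinear_lmul[OF h] bilinear_rmul[OF h] bilinear_lmul[OF q] bilinear_rmul[OF q])
    then show ?thesis using pos y False by (simp add: divide_le_eq mult.commute)
  qed
  moreover have "q x0 x0 > 0" using pos S[OF x0(1)] by blast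
  then have "h x0 x0 = \<mu> * q x0 x0" by (simp add: \<mu>_def)
  ultimately show ?thesis using S[OF x0(1)] by blast
qed

section \<open>Lie algebras and the Killing form\<close>

locale lie =
  fixes br :: "'g::euclidean_space \<Rightarrow> 'g \<Rightarrow> 'g"
  assumes lie_algebra: "lie_algebra br"
begin

lemma linear_br_right: "linear (br x)" and linear_br_left: "linear (\<lambda>x. br x y)"
  using lie_algebra unfolding lie_algebra_def by blast+

lemma bilinear_br: "bilinear br"
  using linear_br_right linear_br_left by (simp add: bilinear_def)

lemma br_antisym: "br x y = - br y x"
  using lie_algebra unfolding lie_algebra_def by blast

lemma br_self [simp]: "br x x = 0"
proof -
  have "2 *\<^sub>R br x x = 0"
    using br_antisym[of x x] by (simp add: scaleR_2 eq_neg_iff_add_eq_0)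
  then show ?thesis by simp
qed

lemmas br_simps = bilinear_ladd[OF bilinear_br] bilinear_radd[OF bilinear_br]
  bilinear_lmul[OF bilinear_br] bilinear_rmul[OF bilinear_br] bilinear_lsub[OF bilinear_br]
  bilinear_rsub[OF bilinear_br] bilinear_lneg[OF bilinear_br] bilinear_rneg[OF bilinear_br]
  bilinear_lzero[OF bilinear_br] bilinear_rzero[OF bilinear_br]

lemma br_jacobi: "br (br x y) w = br x (br y w) - br y (br x w)"
proof -
  have "br x (br y w) + br y (br w x) + br w (br x y) = 0"
    using lie_algebra unfolding lie_algebra_def by blast
  then show ?thesis
    using br_antisym[of w x] br_antisym[of w "br x y"] by (simp add: br_simps algebra_simps)
qed

lemma linear_br_br: "linear (\<lambda>v. br x (br y v))"
  using linear_compose[OF linear_br_right[of y] linear_br_right[of x]] by (simp add: o_def)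

lemma bilinear_killing: "bilinear (killing br)"
  unfolding bilinear_def killing_def
  by (simp add: linear_iff br_simps trace_end_add trace_end_scale)

lemmas killing_simps = bilinear_ladd[OF bilinear_killing] bilinear_radd[OF bilinear_killing]
  bilinear_lmul[OF bilinear_killing] bilinear_rmul[OF bilinear_killing]
  bilinear_lsub[OF bilinear_killing] bilinear_rsub[OF bilinear_killing]
  bilinear_lneg[OF bilinear_killing] bilinear_rneg[OF bilinear_killing]
  bilinear_lzero[OF bilinear_killing] bilinear_rzero[OF bilinear_killing]

lemma linear_killing_left: "linear (\<lambda>x. killing br x y)"
  and linear_killing_right: "linear (\<lambda>y. killing br x y)"
  using bilinear_killing by (simp_all add: bilinear_def)

lemma killing_sym: "killing br x y = killing br y x"
  unfolding killing_def using trace_end_comp_commute[OF linear_br_right linear_br_right] by simp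

lemma killing_br_skew: "killing br (br x y) z = - killing br y (br x z)"
proof -
  have "trace_end (\<lambda>v. br x (br y (br z v))) = trace_end (\<lambda>v. br y (br z (br x v)))"
    using trace_end_comp_commute[OF linear_br_right[of x] linear_br_br[of y z]] by simp
  then show ?thesis
    unfolding killing_def br_jacobi br_simps trace_end_diff by simp
qed

lemma killing_br_assoc: "killing br (br x y) z = killing br x (br y z)"
  using killing_br_skew[of y x z] br_antisym[of x y] by (simp add: killing_simps)

end

section \<open>Scalar curvature of a metric that is diagonal in an orthonormal basis\<close>

text \<open>The coefficient of \<open>(C\<^sub>a\<^sub>b\<^sup>d)\<^sup>2\<close> in \<open>\<langle>R(a,b)b,a\<rangle>/\<lambda>\<^sub>b\<close> for the metric with eigenvalues
  \<open>\<lambda>\<close>, when the structure constants satisfy \<open>C\<^sub>a\<^sub>d\<^sup>b = -\<epsilon>\<^sub>b\<epsilon>\<^sub>d C\<^sub>a\<^sub>b\<^sup>d\<close>.\<close>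
definition scal_weight :: "real \<Rightarrow> real \<Rightarrow> real \<Rightarrow> real \<Rightarrow> real \<Rightarrow> real \<Rightarrow> real" where
  "scal_weight la lb ld ea eb ed =
     (- (1 + lb / ld * (eb * ed) - la / ld * (ea * ed)) * (ea * ed + ld / la - lb / la * (eb * ed)) / 4
      - (ld / la - ea * ed - lb / la * (eb * ed)) / 2) / lb"

locale diagonal_metric = lie br for br :: "'g::euclidean_space \<Rightarrow> 'g \<Rightarrow> 'g" +
  fixes Q :: "'g \<Rightarrow> 'g \<Rightarrow> real" and E :: "'g set" and lam :: "'g \<Rightarrow> real"
  assumes bilinear_Q: "bilinear Q" and Q_sym: "Q x y = Q y x" and onb_E: "form_onb Q UNIV E"
    and lam_pos: "a \<in> E \<Longrightarrow> lam a > 0"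
begin

definition metric :: "'g \<Rightarrow> 'g \<Rightarrow> real" where
  "metric x y = (\<Sum>a\<in>E. lam a * Q x a * Q y a)"

lemma finite_E: "finite E"
  using onb_E by (simp add: form_onb_def)

lemma E_expansion: "(\<Sum>a\<in>E. Q x a *\<^sub>R a) = x"
  using onb_E by (simp add: form_onb_def)

lemma Q_E: "a \<in> E \<Longrightarrow> b \<in> E \<Longrightarrow> Q a b = (if a = b then 1 else 0)"
  using onb_E by (simp add: form_onb_def)

lemma Q_E_coeff: "b \<in> E \<Longrightarrow> Q (\<Sum>a\<in>E. c a *\<^sub>R a) b = c b"
  by (rule form_onb_coeff[OF onb_E bilinear_Q])

lemmas Q_simps = bilinear_ladd[OF bilinear_Q] bilinear_radd[OF bilinear_Q]
  bilinear_lmul[OF bilinear_Q] bilinear_rmul[OF bilinear_Q] bilinear_lsub[OF bilinear_Q]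
  bilinear_rsub[OF bilinear_Q] bilinear_lneg[OF bilinear_Q] bilinear_rneg[OF bilinear_Q]
  bilinear_lzero[OF bilinear_Q] bilinear_rzero[OF bilinear_Q]

lemma linear_Q_left: "linear (\<lambda>x. Q x y)"
  using bilinear_Q by (simp add: bilinear_def)

lemma bilinear_metric: "bilinear metric"
  unfolding bilinear_def metric_def
  by (simp add: linear_iff Q_simps distrib_left distrib_right sum.distrib sum_distrib_left mult_ac)

lemma metric_E: "b \<in> E \<Longrightarrow> metric b w = lam b * Q w b"
proof -
  assume b: "b \<in> E"
  have "metric b w = (\<Sum>a\<in>E. if a = b then lam b * Q w b else 0)"
    unfolding metric_def using b by (intro sum.cong) (auto simp: Q_E)
  then show ?thesis using finite_E b by simp
qed

lemma metric_nondegenerate: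
  assumes "\<forall>w. metric z w = metric z' w" shows "z = z'"
proof -
  define d where "d = z - z'"
  have "metric d d = 0" using assms by (simp add: d_def bilinear_lsub[OF bilinear_metric])
  then have "(\<Sum>a\<in>E. lam a * (Q d a)\<^sup>2) = 0" by (simp add: metric_def power2_eq_square mult.assoc)
  moreover have "\<forall>a\<in>E. lam a * (Q d a)\<^sup>2 \<ge> 0" using lam_pos by (simp add: less_imp_le)
  ultimately have "\<forall>a\<in>E. lam a * (Q d a)\<^sup>2 = 0"
    using sum_nonneg_eq_0_iff[OF finite_E, of "\<lambda>a. lam a * (Q d a)\<^sup>2"] by simp
  then have "\<forall>a\<in>E. Q d a = 0" using lam_pos by force
  then have "d = 0" using E_expansion[of d] by simp
  then show ?thesis by (simp add: d_def)
qed

lemma the_metric_dual: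
  assumes "\<forall>w. metric z w = f w"
  shows "(THE z. \<forall>w. metric z w = f w) = z"
  using assms metric_nondegenerate by (intro the_equality) auto

lemma metric_dual_vector:
  assumes lin: "linear f"
  shows "\<forall>w. metric (\<Sum>c\<in>E. (f c / lam c) *\<^sub>R c) w = f w"
proof
  fix w
  have "metric (\<Sum>c\<in>E. (f c / lam c) *\<^sub>R c) w = (\<Sum>a\<in>E. f (Q w a *\<^sub>R a))"
    unfolding metric_def using lam_pos
    by (intro sum.cong) (auto simp: Q_E_coeff linear_scale[OF lin] less_imp_neq[symmetric])
  also have "\<dots> = f w" by (simp add: linear_sum[OF lin, symmetric] E_expansion)
  finally show "metric (\<Sum>c\<in>E. (f c / lam c) *\<^sub>R c) w = f w" .
qed

lemma tr_wrt_metric: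
  assumes T: "bilinear T"
  shows "tr_wrt metric T = (\<Sum>a\<in>E. T a a / lam a)"
proof -
  define Z where "Z x = (\<Sum>c\<in>E. (T x c / lam c) *\<^sub>R c)" for x
  have "(THE z. \<forall>w. metric z w = T x w) = Z x" for x
    unfolding Z_def using T by (intro the_metric_dual metric_dual_vector) (simp add: bilinear_def)
  then have "tr_wrt metric T = trace_end Z" by (simp add: tr_wrt_def)
  also have "\<dots> = (\<Sum>a\<in>E. Q (Z a) a)"
  proof (rule trace_end_form_onb[OF onb_E _ linear_Q_left])
    show "linear Z" unfolding Z_def
      by (rule linearI) (simp_all add: bilinear_ladd[OF T] bilinear_lmul[OF T] add_divide_distrib
          scaleR_add_left sum.distrib scaleR_sum_right)
  qed
  also have "\<dots> = (\<Sum>a\<in>E. T a a / lam a)" unfolding Z_def by (intro sum.cong) (auto simp: Q_E_coeff)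
  finally show ?thesis .
qed

lemma adj_metric: "adj metric br x y = (\<Sum>c\<in>E. (metric y (br x c) / lam c) *\<^sub>R c)"
proof -
  have "linear (\<lambda>w. metric y (br x w))"
    using linear_compose[OF linear_br_right, of "metric y"] bilinear_metric
    by (simp add: o_def bilinear_def)
  then show ?thesis unfolding adj_def by (rule the_metric_dual[OF metric_dual_vector])
qed

lemma bilinear_levi_civita: "bilinear (levi_civita metric br)"
proof -
  have adj: "bilinear (adj metric br)"
    unfolding bilinear_def adj_metric
    by (simp add: linear_iff bilinear_ladd[OF bilinear_metric] bilinear_lmul[OF bilinear_metric] br_simps
        bilinear_radd[OF bilinear_metric] bilinear_rmul[OF bilinear_metric] add_divide_distrib
        scaleR_add_left sum.distrib scaleR_sum_right)
  show ?thesis unfolding bilinear_def levi_civita_def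
    by (simp add: linear_iff br_simps bilinear_ladd[OF adj] bilinear_lmul[OF adj]
        bilinear_radd[OF adj] bilinear_rmul[OF adj] algebra_simps)
qed

lemmas levi_civita_simps = bilinear_ladd[OF bilinear_levi_civita] bilinear_radd[OF bilinear_levi_civita]
  bilinear_lmul[OF bilinear_levi_civita] bilinear_rmul[OF bilinear_levi_civita]
  bilinear_lsub[OF bilinear_levi_civita] bilinear_rsub[OF bilinear_levi_civita]
  bilinear_lneg[OF bilinear_levi_civita] bilinear_rneg[OF bilinear_levi_civita]
  bilinear_lzero[OF bilinear_levi_civita] bilinear_rzero[OF bilinear_levi_civita]

lemma linear_curv:
  shows "linear (\<lambda>x. curv metric br x y w)" "linear (\<lambda>y. curv metric br x y w)"
    "linear (\<lambda>w. curv metric br x y w)"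
  unfolding curv_def by (simp_all add: linear_iff levi_civita_simps br_simps algebra_simps)

definition sc :: "'g \<Rightarrow> 'g \<Rightarrow> 'g \<Rightarrow> real" where
  "sc a b c = Q (br a b) c"

definition lc_coeff :: "'g \<Rightarrow> 'g \<Rightarrow> 'g \<Rightarrow> real" where
  "lc_coeff a b c = (sc a b c - (lam b / lam c) * sc a c b - (lam a / lam c) * sc b c a) / 2"

lemma br_E_expansion: "br a b = (\<Sum>c\<in>E. sc a b c *\<^sub>R c)"
  unfolding sc_def by (rule E_expansion[symmetric])

lemma levi_civita_E_expansion:
  assumes "a \<in> E" "b \<in> E"
  shows "levi_civita metric br a b = (\<Sum>c\<in>E. lc_coeff a b c *\<^sub>R c)"
proof -
  have adj: "adj metric br x y = (\<Sum>c\<in>E. ((lam y / lam c) * sc x c y) *\<^sub>R c)"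
    if "x \<in> E" "y \<in> E" for x y
    unfolding adj_metric using that by (intro sum.cong) (auto simp: metric_E sc_def)
  have "br a b - adj metric br a b - adj metric br b a =
      (\<Sum>c\<in>E. (sc a b c - (lam b / lam c) * sc a c b - (lam a / lam c) * sc b c a) *\<^sub>R c)"
    unfolding adj[OF assms] adj[OF assms(2,1)] br_E_expansion[of a b]
    by (simp only: scaleR_diff_left sum_subtractf)
  then show ?thesis
    unfolding levi_civita_def lc_coeff_def
    by (simp only: scaleR_sum_right scaleR_scaleR) (simp add: mult.commute)
qed

lemma sum_scaleR_sum_swap:
  "(\<Sum>d\<in>E. f d *\<^sub>R (\<Sum>e\<in>E. h d e *\<^sub>R e)) = (\<Sum>e\<in>E. (\<Sum>d\<in>E. f d * h d e) *\<^sub>R e)"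
proof -
  have "(\<Sum>d\<in>E. f d *\<^sub>R (\<Sum>e\<in>E. h d e *\<^sub>R e)) = (\<Sum>d\<in>E. \<Sum>e\<in>E. (f d * h d e) *\<^sub>R e)"
    by (simp add: scaleR_sum_right)
  also have "\<dots> = (\<Sum>e\<in>E. (\<Sum>d\<in>E. f d * h d e) *\<^sub>R e)"
    by (subst sum.swap) (simp add: scaleR_sum_left)
  finally show ?thesis .
qed

lemma Q_curv_E:
  assumes a: "a \<in> E" and b: "b \<in> E" and c: "c \<in> E"
  shows "Q (curv metric br a b c) a =
    (\<Sum>d\<in>E. lc_coeff b c d * lc_coeff a d a - lc_coeff a c d * lc_coeff b d a - sc a b d * lc_coeff d c a)"
proof -
  have lsum: "levi_civita metric br (\<Sum>d\<in>E. f d *\<^sub>R d) y = (\<Sum>d\<in>E. f d *\<^sub>R levi_civita metric br d y)"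
    and rsum: "levi_civita metric br x (\<Sum>d\<in>E. f d *\<^sub>R d) = (\<Sum>d\<in>E. f d *\<^sub>R levi_civita metric br x d)"
    for f x y
  proof -
    have ll: "linear (\<lambda>x. levi_civita metric br x y)" and lr: "linear (levi_civita metric br x)"
      using bilinear_levi_civita by (simp_all add: bilinear_def)
    show "levi_civita metric br (\<Sum>d\<in>E. f d *\<^sub>R d) y = (\<Sum>d\<in>E. f d *\<^sub>R levi_civita metric br d y)"
      "levi_civita metric br x (\<Sum>d\<in>E. f d *\<^sub>R d) = (\<Sum>d\<in>E. f d *\<^sub>R levi_civita metric br x d)"
      by (simp_all add: linear_sum[OF ll] linear_sum[OF lr] levi_civita_simps)
  qed
  have lc_lc: "Q (levi_civita metric br x (levi_civita metric br y c)) a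
      = (\<Sum>d\<in>E. lc_coeff y c d * lc_coeff x d a)" if "x \<in> E" "y \<in> E" for x y
  proof -
    have "levi_civita metric br x (levi_civita metric br y c)
        = (\<Sum>d\<in>E. lc_coeff y c d *\<^sub>R (\<Sum>e\<in>E. lc_coeff x d e *\<^sub>R e))"
      unfolding levi_civita_E_expansion[OF that(2) c] rsum
      using that by (intro sum.cong) (auto simp: levi_civita_E_expansion)
    then show ?thesis using a by (simp add: sum_scaleR_sum_swap Q_E_coeff)
  qed
  have "levi_civita metric br (br a b) c = (\<Sum>d\<in>E. sc a b d *\<^sub>R (\<Sum>e\<in>E. lc_coeff d c e *\<^sub>R e))"
    unfolding br_E_expansion[of a b] lsum using c by (intro sum.cong) (auto simp: levi_civita_E_expansion)
  then have "Q (levi_civita metric br (br a b) c) a = (\<Sum>d\<in>E. sc a b d * lc_coeff d c a)"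
    using a by (simp add: sum_scaleR_sum_swap Q_E_coeff)
  then show ?thesis unfolding curv_def Q_simps lc_lc[OF a b] lc_lc[OF b a] by (simp add: sum_subtractf)
qed

lemma scal_metric_E:
  "scal metric br = (\<Sum>b\<in>E. \<Sum>a\<in>E. \<Sum>d\<in>E.
     (lc_coeff b b d * lc_coeff a d a - lc_coeff a b d * lc_coeff b d a - sc a b d * lc_coeff d b a) / lam b)"
proof -
  have ricci: "ricci metric br y w = (\<Sum>a\<in>E. Q (curv metric br a y w) a)" for y w
    unfolding ricci_def by (rule trace_end_form_onb[OF onb_E linear_curv(1) linear_Q_left])
  have "bilinear (ricci metric br)"
    unfolding bilinear_def ricci
    by (simp add: linear_iff linear_add[OF linear_curv(2)] linear_scale[OF linear_curv(2)]
        linear_add[OF linear_curv(3)] linear_scale[OF linear_curv(3)] Q_simps sum.distrib sum_distrib_left)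
  then have "scal metric br = (\<Sum>b\<in>E. ricci metric br b b / lam b)"
    unfolding scal_def by (rule tr_wrt_metric)
  then show ?thesis
    by (simp add: ricci Q_curv_E sum_divide_distrib)
qed

lemma scal_metric_signed:
  assumes sign: "\<And>a b d. a \<in> E \<Longrightarrow> b \<in> E \<Longrightarrow> d \<in> E \<Longrightarrow> sc a d b = - (eps b * eps d) * sc a b d"
  shows "scal metric br = (\<Sum>b\<in>E. \<Sum>a\<in>E. \<Sum>d\<in>E.
     (sc a b d)\<^sup>2 * scal_weight (lam a) (lam b) (lam d) (eps a) (eps b) (eps d))"
  unfolding scal_metric_E
proof (intro sum.cong refl)
  fix a b d assume a: "a \<in> E" and b: "b \<in> E" and d: "d \<in> E"
  define C where "C = sc a b d"
  have antisym: "sc x y w = - sc y x w" for x y w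
    unfolding sc_def using br_antisym[of x y] by (simp add: Q_simps)
  have e1: "sc a d b = - (eps b * eps d) * C" using sign[OF a b d] by (simp add: C_def)
  have e2: "sc b d a = eps a * eps d * C"
    using sign[OF b a d] antisym[of b a d] by (simp add: C_def mult.commute)
  have e4: "sc d a b = eps b * eps d * C" using antisym[of d a b] e1 by simp
  have e5: "sc d b a = - (eps a * eps d) * C" using antisym[of d b a] e2 by simp
  have e6: "sc b b d = 0" "sc b d b = 0"
    using sign[OF b b d] by (simp_all add: sc_def Q_simps)
  show "(lc_coeff b b d * lc_coeff a d a - lc_coeff a b d * lc_coeff b d a - sc a b d * lc_coeff d b a) / lam b
      = (sc a b d)\<^sup>2 * scal_weight (lam a) (lam b) (lam d) (eps a) (eps b) (eps d)"
    unfolding lc_coeff_def scal_weight_def e1 e2 e4 e5 e6 antisym[of b a d] C_def[symmetric]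
    by (simp add: power2_eq_square algebra_simps diff_divide_distrib add_divide_distrib)
qed

end

section \<open>The Cartan decomposition \<open>\<gg> = \<kk> \<oplus> \<pp>\<close> and the form \<open>Q\<close>\<close>

locale cartan_setting = lie br for br :: "'g::euclidean_space \<Rightarrow> 'g \<Rightarrow> 'g" +
  fixes k :: "'g set" and ks :: "nat \<Rightarrow> 'g set" and r m :: nat
  assumes simple: "simple_lie br UNIV" and noncompact: "noncompact_lie br"
    and cartan: "cartan_subalg br k" and decomp: "k_decomp br k ks r m"
begin

abbreviation "B \<equiv> killing br"
abbreviation "p \<equiv> kperp br k"
abbreviation "K \<equiv> projk br k"
abbreviation "Q \<equiv> Qform br k"

lemma subspace_k: "subspace k"
  and br_k_k: "x \<in> k \<Longrightarrow> y \<in> k \<Longrightarrow> br x y \<in> k"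
  and killing_neg_k: "x \<in> k \<Longrightarrow> x \<noteq> 0 \<Longrightarrow> B x x < 0"
  and br_p_p: "x \<in> p \<Longrightarrow> y \<in> p \<Longrightarrow> br x y \<in> k"
  and killing_pos_p: "x \<in> p \<Longrightarrow> x \<noteq> 0 \<Longrightarrow> B x x > 0"
  using cartan by (simp_all add: cartan_subalg_def)

lemma killing_eq_0_k: "x \<in> k \<Longrightarrow> B x x = 0 \<Longrightarrow> x = 0"
  using killing_neg_k by force

lemma mem_p_iff: "x \<in> p \<longleftrightarrow> (\<forall>y\<in>k. B x y = 0)"
  by (simp add: kperp_def)

lemma subspace_p: "subspace p"
  unfolding subspace_def kperp_def by (auto simp: killing_simps)

lemma killing_p_k: "x \<in> k \<Longrightarrow> y \<in> p \<Longrightarrow> B y x = 0"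
  and killing_k_p: "x \<in> k \<Longrightarrow> y \<in> p \<Longrightarrow> B x y = 0"
  using mem_p_iff killing_sym by metis+

lemma bilinear_neg_killing: "bilinear (\<lambda>x y. - B x y)"
  unfolding bilinear_def by (simp add: linear_iff killing_simps)

lemma killing_proj_exists:
  assumes "subspace U" "U \<subseteq> k"
  shows "\<exists>u\<in>U. \<forall>w\<in>U. B (x - u) w = 0"
proof -
  have "\<exists>u\<in>U. \<forall>w\<in>U. - B (x - u) w = 0"
    by (rule form_proj_exists[OF bilinear_neg_killing assms(1)])
      (use assms killing_neg_k in \<open>auto simp: killing_sym\<close>)
  then show ?thesis by simp
qed

lemma projk_eqI: assumes "u \<in> k" "x - u \<in> p" shows "K x = u"
  unfolding projk_def
proof (rule the_equality)
  show "u \<in> k \<and> (\<forall>w\<in>k. B (x - u) w = 0)" using assms mem_p_iff by blast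
  fix u' assume "u' \<in> k \<and> (\<forall>w\<in>k. B (x - u') w = 0)"
  then show "u' = u"
    using form_proj_unique[OF subspace_k bilinear_killing, of u' x u] assms mem_p_iff killing_neg_k
    by force
qed

lemma projk_in_k: "K x \<in> k" and diff_projk_in_p: "x - K x \<in> p"
proof -
  obtain u where "u \<in> k" "\<forall>w\<in>k. B (x - u) w = 0"
    using killing_proj_exists[OF subspace_k] by blast
  then have "K x = u" "u \<in> k" "x - u \<in> p" using projk_eqI mem_p_iff by auto
  then show "K x \<in> k" "x - K x \<in> p" by simp_all
qed

lemma projk_k: "x \<in> k \<Longrightarrow> K x = x"
  by (rule projk_eqI) (auto simp: subspace_0[OF subspace_p])

lemma projk_p: "x \<in> p \<Longrightarrow> K x = 0"
  by (rule projk_eqI) (auto simp: subspace_0[OF subspace_k])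

lemma linear_projk: "linear K"
proof (rule linearI)
  fix x y :: 'g and c :: real
  show "K (x + y) = K x + K y"
  proof (rule projk_eqI)
    show "K x + K y \<in> k" using projk_in_k subspace_k by (simp add: subspace_add)
    have "x + y - (K x + K y) = (x - K x) + (y - K y)" by simp
    then show "x + y - (K x + K y) \<in> p" using diff_projk_in_p subspace_p by (metis subspace_add)
  qed
  show "K (c *\<^sub>R x) = c *\<^sub>R K x"
  proof (rule projk_eqI)
    show "c *\<^sub>R K x \<in> k" using projk_in_k subspace_k by (simp add: subspace_scale)
    have "c *\<^sub>R x - c *\<^sub>R K x = c *\<^sub>R (x - K x)" by (simp add: algebra_simps)
    then show "c *\<^sub>R x - c *\<^sub>R K x \<in> p" using diff_projk_in_p subspace_p by (metis subspace_scale)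
  qed
qed

lemmas projk_simps = linear_add[OF linear_projk] linear_scale[OF linear_projk]
  linear_diff[OF linear_projk] linear_neg[OF linear_projk] linear_0[OF linear_projk]

lemma k_inter_p: "x \<in> k \<Longrightarrow> x \<in> p \<Longrightarrow> x = 0"
  using projk_k projk_p by force

lemma br_k_p: assumes "x \<in> k" "e \<in> p" shows "br x e \<in> p"
  unfolding mem_p_iff using killing_br_skew[of x e] br_k_k[OF assms(1)] killing_p_k assms(2) by simp

lemma br_p_k: "x \<in> k \<Longrightarrow> e \<in> p \<Longrightarrow> br e x \<in> p"
  using br_k_p br_antisym[of e x] subspace_neg[OF subspace_p] by fastforce

lemma projk_br_k: assumes x: "x \<in> k" shows "K (br x w) = br x (K w)"
proof (rule projk_eqI)
  show "br x (K w) \<in> k" using x projk_in_k br_k_k by blast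
  show "br x w - br x (K w) \<in> p"
    using br_k_p[OF x diff_projk_in_p] by (simp add: br_simps)
qed

lemma projk_br_p: assumes e: "e \<in> p" shows "K (br e w) = br e (w - K w)"
proof (rule projk_eqI)
  show "br e (w - K w) \<in> k" using e diff_projk_in_p br_p_p by blast
  show "br e w - br e (w - K w) \<in> p"
    using br_p_k[OF projk_in_k e] by (simp add: br_simps)
qed

lemma bilinear_Q: "bilinear Q"
  unfolding bilinear_def Qform_def
  by (simp add: linear_iff projk_simps killing_simps algebra_simps)

lemmas Q_simps = bilinear_ladd[OF bilinear_Q] bilinear_radd[OF bilinear_Q]
  bilinear_lmul[OF bilinear_Q] bilinear_rmul[OF bilinear_Q] bilinear_lsub[OF bilinear_Q]
  bilinear_rsub[OF bilinear_Q] bilinear_lneg[OF bilinear_Q] bilinear_rneg[OF bilinear_Q]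
  bilinear_lzero[OF bilinear_Q] bilinear_rzero[OF bilinear_Q]

lemma linear_Q_left: "linear (\<lambda>x. Q x y)"
  using bilinear_Q by (simp add: bilinear_def)

lemma Q_sym: "Q x y = Q y x"
  by (simp add: Qform_def killing_sym)

lemma Q_pos: assumes "x \<noteq> 0" shows "Q x x > 0"
proof -
  have "B (x - K x) (x - K x) \<ge> 0"
    using killing_pos_p[OF diff_projk_in_p, of x] by (cases "x - K x = 0") (auto simp: killing_simps)
  moreover have "B (K x) (K x) \<le> 0"
    using killing_neg_k[OF projk_in_k, of x] by (cases "K x = 0") (auto simp: killing_simps)
  moreover have "B (x - K x) (x - K x) > 0 \<or> B (K x) (K x) < 0"
    using assms killing_pos_p[OF diff_projk_in_p, of x] killing_neg_k[OF projk_in_k, of x] by force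
  ultimately show ?thesis by (auto simp: Qform_def)
qed

lemma Q_nonneg: "Q x x \<ge> 0"
  using Q_pos[of x] by (cases "x = 0") (auto simp: Q_simps)

lemma Q_p: assumes a: "a \<in> p" shows "Q a y = B a y"
proof -
  have "B a (K y) = 0" using killing_p_k[OF projk_in_k a] .
  then show ?thesis using projk_p[OF a] by (simp add: Qform_def killing_simps)
qed

lemma Q_k: assumes a: "a \<in> k" shows "Q a y = - B a y"
proof -
  have "B a (y - K y) = 0" using killing_k_p[OF a diff_projk_in_p] .
  then show ?thesis using projk_k[OF a] by (simp add: Qform_def killing_simps)
qed

lemma Q_k_p: "a \<in> k \<Longrightarrow> b \<in> p \<Longrightarrow> Q a b = 0"
  using Q_k killing_k_p by simp

lemma Q_br_k_skew:
  assumes x: "x \<in> k" shows "Q (br x w) c = - Q w (br x c)"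
  unfolding Qform_def projk_br_k[OF x]
  by (simp add: br_simps[symmetric] killing_br_skew)

lemma Q_br_p_sym:
  assumes e: "e \<in> p" shows "Q (br e w) c = Q w (br e c)"
proof -
  have "br e w - br e (w - K w) = br e (K w)" for w by (simp add: br_simps)
  then show ?thesis
    unfolding Qform_def projk_br_p[OF e] by (simp add: killing_br_skew)
qed

lemma p_nontrivial: "\<exists>e\<in>p. e \<noteq> 0"
proof -
  obtain x where "x \<noteq> 0" "\<not> B x x < 0" using noncompact by (auto simp: noncompact_lie_def)
  then have "x - K x \<noteq> 0" using killing_neg_k[OF projk_in_k, of x] by auto
  then show ?thesis using diff_projk_in_p by blast
qed

end

section \<open>The ideals \<open>\<kk>\<^sub>i\<close>\<close>

context cartan_setting
begin

abbreviation "dk \<equiv> derived br k"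
abbreviation "zk \<equiv> centre br k"

lemma br_k_k_in_dk: "x \<in> k \<Longrightarrow> y \<in> k \<Longrightarrow> br x y \<in> dk"
  unfolding derived_def by (rule span_base) blast

lemma subspace_dk: "subspace dk"
  by (simp add: derived_def)

lemma dk_subset_k: "dk \<subseteq> k"
  unfolding derived_def using br_k_k subspace_k by (intro span_minimal) auto

lemma subspace_zk: "subspace zk"
  unfolding centre_def subspace_def using subspace_k by (auto simp: br_simps subspace_def)

lemma k_ideal_zk: "lie_ideal_of br k zk"
proof -
  have "br x y = 0" if "x \<in> k" "y \<in> zk" for x y
    using that br_antisym[of x y] by (auto simp: centre_def)
  then show ?thesis
    unfolding lie_ideal_of_def using subspace_zk subspace_0[OF subspace_zk] by (auto simp: centre_def)
qed

lemma k_eq_dk_plus_zk: assumes x: "x \<in> k" shows "\<exists>t\<in>dk. x - t \<in> zk"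
proof -
  obtain t where t: "t \<in> dk" "\<forall>w\<in>dk. B (x - t) w = 0"
    using killing_proj_exists[OF subspace_dk dk_subset_k] by blast
  have xt: "x - t \<in> k" using x t dk_subset_k subspace_k by (auto simp: subspace_diff)
  have "br (x - t) y = 0" if y: "y \<in> k" for y
  proof -
    have "B (br (x - t) y) (br (x - t) y) = B (x - t) (br y (br (x - t) y))" by (rule killing_br_assoc)
    also have "\<dots> = 0" using t br_k_k_in_dk[OF y br_k_k[OF xt y]] by simp
    finally show ?thesis using killing_eq_0_k br_k_k[OF xt y] by blast
  qed
  then show ?thesis using t xt by (auto simp: centre_def)
qed

lemma dk_inter_zk: assumes "x \<in> dk" "x \<in> zk" shows "x = 0"
proof -
  have "B x w = 0" if "w \<in> dk" for w
    using that unfolding derived_def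
  proof (rule span_induct[where P="\<lambda>w. B x w = 0"])
    show "subspace {w. B x w = 0}" by (rule linear_subspace_kernel[OF linear_killing_right])
    fix g assume "g \<in> {br a b |a b. a \<in> k \<and> b \<in> k}"
    then obtain a b where "g = br a b" "a \<in> k" by blast
    then show "B x g = 0" using assms(2) killing_br_assoc[of x a b] by (auto simp: centre_def killing_simps)
  qed
  then show ?thesis using assms dk_subset_k killing_eq_0_k by blast
qed

lemma k_ideal_compl:
  assumes I: "lie_ideal_of br k I" and y: "y \<in> k"
  shows "\<exists>y1\<in>I. y - y1 \<in> k \<and> (\<forall>x\<in>I. br x (y - y1) = 0)"
proof -
  have subI: "subspace I" and Ik: "I \<subseteq> k" and Ibr: "\<And>a b. a \<in> k \<Longrightarrow> b \<in> I \<Longrightarrow> br a b \<in> I"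
    using I by (auto simp: lie_ideal_of_def)
  obtain y1 where y1: "y1 \<in> I" "\<forall>w\<in>I. B (y - y1) w = 0"
    using killing_proj_exists[OF subI Ik] by blast
  have y2k: "y - y1 \<in> k" using y y1 Ik subspace_k by (auto simp: subspace_diff)
  have "br x (y - y1) = 0" if x: "x \<in> I" for x
  proof -
    have c: "br x (y - y1) \<in> I"
      using Ibr[OF y2k x] br_antisym[of x "y - y1"] subspace_neg[OF subI] by metis
    have "B (br x (y - y1)) (br x (y - y1)) = - B (y - y1) (br x (br x (y - y1)))"
      by (rule killing_br_skew)
    also have "\<dots> = 0" using y1 Ibr[OF _ c, of x] x Ik by auto
    finally show ?thesis using killing_eq_0_k c Ik by blast
  qed
  then show ?thesis using y1 y2k by blast
qed

lemma killing_simple_ideal_centralizer: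
  assumes I: "lie_ideal_of br k I" and si: "simple_lie br I" and x: "x \<in> I"
    and com: "\<And>b. b \<in> I \<Longrightarrow> br b y = 0"
  shows "B x y = 0"
proof -
  define D where "D = span {br a b |a b. a \<in> I \<and> b \<in> I}"
  have "D \<subseteq> I" unfolding D_def using I by (intro span_minimal) (auto simp: lie_ideal_of_def)
  then have "lie_ideal_of br I D"
    unfolding lie_ideal_of_def by (auto simp: D_def intro!: span_base)
  moreover have "D \<noteq> {0}"
    using si span_base[of _ "{br a b |a b. a \<in> I \<and> b \<in> I}"] by (force simp: simple_lie_def D_def)
  ultimately have "x \<in> D" using si x by (auto simp: simple_lie_def)
  then show ?thesis
    unfolding D_def
  proof (rule span_induct[where P="\<lambda>x. B x y = 0"])
    show "subspace {x. B x y = 0}" by (rule linear_subspace_kernel[OF linear_killing_left])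
    fix g assume "g \<in> {br a b |a b. a \<in> I \<and> b \<in> I}"
    then obtain a b where "g = br a b" "b \<in> I" by blast
    then show "B g y = 0" using killing_br_assoc[of a b y] com by (simp add: killing_simps)
  qed
qed

lemma simple_ideal_ks: "i < r \<Longrightarrow> lie_ideal_of br dk (ks i) \<and> simple_lie br (ks i)"
  using decomp by (auto simp: k_decomp_def)

lemma k_ideal_simple_ks: assumes i: "i < r" shows "lie_ideal_of br k (ks i)"
proof -
  have sub: "subspace (ks i)" and Is: "ks i \<subseteq> dk"
    and Ibr: "\<And>a b. a \<in> dk \<Longrightarrow> b \<in> ks i \<Longrightarrow> br a b \<in> ks i"
    using simple_ideal_ks[OF i] by (auto simp: lie_ideal_of_def)
  have "br x y \<in> ks i" if x: "x \<in> k" and y: "y \<in> ks i" for x y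
  proof -
    obtain t where t: "t \<in> dk" "x - t \<in> zk" using k_eq_dk_plus_zk[OF x] by blast
    have "br (x - t) y = 0" using t(2) y Is dk_subset_k by (auto simp: centre_def)
    then show ?thesis using Ibr[OF t(1) y] by (simp add: br_simps)
  qed
  then show ?thesis using sub Is dk_subset_k by (auto simp: lie_ideal_of_def)
qed

lemma ks_nonzero_simple: "i < r \<Longrightarrow> ks i \<noteq> {0}"
  using simple_ideal_ks by (force simp: simple_lie_def)

lemma ks_inter_simple:
  assumes i: "i < r" and j: "j < r" and ij: "i \<noteq> j"
  shows "ks i \<inter> ks j = {0}"
proof -
  have Ii: "lie_ideal_of br k (ks i)" and Ij: "lie_ideal_of br k (ks j)"
    using k_ideal_simple_ks i j by auto
  have si: "simple_lie br (ks i)" and sj: "simple_lie br (ks j)" using simple_ideal_ks i j by auto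
  have "lie_ideal_of br (ks i) (ks i \<inter> ks j)"
    using Ii Ij unfolding lie_ideal_of_def by (auto intro: subspace_inter)
  then have "ks i \<inter> ks j = {0} \<or> ks i \<inter> ks j = ks i" using si by (auto simp: simple_lie_def)
  moreover have "ks i \<inter> ks j \<noteq> ks i"
  proof
    assume "ks i \<inter> ks j = ks i"
    then have "lie_ideal_of br (ks j) (ks i)" using Ii Ij unfolding lie_ideal_of_def by blast
    then have "ks i = {0} \<or> ks i = ks j" using sj by (auto simp: simple_lie_def)
    moreover have "ks i \<noteq> ks j" using decomp i j ij by (auto simp: k_decomp_def inj_on_def)
    ultimately show False using ks_nonzero_simple[OF i] by blast
  qed
  ultimately show ?thesis by blast
qed

lemma br_disjoint_k_ideals:
  assumes "lie_ideal_of br k I" "lie_ideal_of br k J" "I \<inter> J = {0}" "x \<in> I" "y \<in> J"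
  shows "br x y = 0"
proof -
  have "br x y \<in> I"
    using assms(1,2,4,5) br_antisym[of x y] unfolding lie_ideal_of_def by (metis subsetD subspace_neg)
  moreover have "br x y \<in> J" using assms(1,2,4,5) unfolding lie_ideal_of_def by blast
  ultimately show ?thesis using assms(3) by blast
qed

lemma k_ideal_in_dk_nonabelian:
  assumes J: "lie_ideal_of br k J" and Jdk: "J \<subseteq> dk" and J0: "J \<noteq> {0}"
  shows "\<exists>a\<in>J. \<exists>b\<in>J. br a b \<noteq> 0"
proof (rule ccontr)
  assume abelian: "\<not> ?thesis"
  have "a \<in> zk" if a: "a \<in> J" for a
  proof -
    have "br a y = 0" if y: "y \<in> k" for y
    proof -
      obtain y1 where y1: "y1 \<in> J" "\<forall>x\<in>J. br x (y - y1) = 0" using k_ideal_compl[OF J y] by blast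
      have "br a y = br a y1 + br a (y - y1)" by (simp add: br_simps)
      then show ?thesis using abelian a y1 by auto
    qed
    then show ?thesis using a J by (auto simp: centre_def lie_ideal_of_def)
  qed
  then have "J \<subseteq> {0}" using dk_inter_zk Jdk by blast
  then show False using J0 J subspace_0 by (auto simp: lie_ideal_of_def)
qed

lemma k_ideal_of_k_ideal:
  assumes J: "lie_ideal_of br k J" and J': "lie_ideal_of br J J'"
  shows "lie_ideal_of br k J'"
proof -
  have J'J: "J' \<subseteq> J" and J'br: "\<And>a b. a \<in> J \<Longrightarrow> b \<in> J' \<Longrightarrow> br a b \<in> J'"
    using J' by (auto simp: lie_ideal_of_def)
  have "br y x \<in> J'" if y: "y \<in> k" and x: "x \<in> J'" for y x
  proof -
    obtain y1 where y1: "y1 \<in> J" "\<forall>x\<in>J. br x (y - y1) = 0" using k_ideal_compl[OF J y] by blast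
    then have "br x y = br x y1" using x J'J by (auto simp: br_simps)
    then have "br y x = br y1 x" using br_antisym[of x y] br_antisym[of x y1] by simp
    then show ?thesis using J'br[OF y1(1) x] by simp
  qed
  then show ?thesis using J J' by (auto simp: lie_ideal_of_def)
qed

definition ksum :: "'g set" where
  "ksum = span (\<Union>i<r. ks i)"

lemma ksum_subset_dk: "ksum \<subseteq> dk"
  unfolding ksum_def using simple_ideal_ks subspace_dk
  by (intro span_minimal) (auto simp: lie_ideal_of_def)

lemma k_ideal_ksum: "lie_ideal_of br k ksum"
proof -
  have "br y w \<in> ksum" if y: "y \<in> k" and w: "w \<in> ksum" for y w
  proof -
    have "w \<in> span (\<Union>i<r. ks i)" using w by (simp add: ksum_def)
    then show ?thesis
  proof (rule span_induct[where P="\<lambda>w. br y w \<in> ksum"])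
    show "subspace {w. br y w \<in> ksum}"
      by (rule linear_subspace_linear_preimage[OF linear_br_right]) (simp add: ksum_def)
    fix g assume "g \<in> (\<Union>i<r. ks i)"
    then obtain i where i: "i < r" "g \<in> ks i" by blast
    then have "br y g \<in> ks i" using k_ideal_simple_ks[OF i(1)] y by (auto simp: lie_ideal_of_def)
    then show "br y g \<in> ksum" using i unfolding ksum_def by (auto intro: span_base)
  qed
  qed
  then show ?thesis using ksum_subset_dk dk_subset_k by (auto simp: lie_ideal_of_def ksum_def)
qed

lemma k_ideal_killing_orth_ksum: "lie_ideal_of br k {x\<in>dk. \<forall>w\<in>ksum. B x w = 0}"
proof -
  have "subspace {x\<in>dk. \<forall>w\<in>ksum. B x w = 0}"
    using subspace_dk by (auto simp: subspace_def killing_simps)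
  moreover have "B (br y a) w = 0" if "y \<in> k" "\<forall>w\<in>ksum. B a w = 0" "w \<in> ksum" for y a w
    using that k_ideal_ksum killing_br_skew[of y a w] by (auto simp: lie_ideal_of_def)
  ultimately show ?thesis
    using dk_subset_k br_k_k_in_dk by (auto simp: lie_ideal_of_def)
qed

text \<open>A nonzero \<open>\<kk>\<close>-ideal in the \<open>B\<close>-orthogonal complement of \<open>\<kk>\<^sub>1 + \<dots> + \<kk>\<^sub>r\<close> in \<open>[\<kk>,\<kk>]\<close>
  of minimal dimension would be simple, hence one of the \<open>\<kk>\<^sub>i\<close>, which is absurd.\<close>
lemma dk_subset_ksum: "dk \<subseteq> ksum"
proof (rule ccontr)
  assume "\<not> dk \<subseteq> ksum"
  then obtain x where x: "x \<in> dk" "x \<notin> ksum" by blast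
  define Wp where "Wp = {x\<in>dk. \<forall>w\<in>ksum. B x w = 0}"
  obtain u where u: "u \<in> ksum" "\<forall>w\<in>ksum. B (x - u) w = 0"
    using killing_proj_exists[of ksum x] ksum_subset_dk dk_subset_k by (auto simp: ksum_def)
  have "x - u \<in> Wp" "x - u \<noteq> 0"
    using u x ksum_subset_dk subspace_dk by (auto simp: Wp_def subspace_diff)
  then have Wp0: "Wp \<noteq> {0}" by blast
  define P where "P J \<longleftrightarrow> lie_ideal_of br k J \<and> J \<subseteq> Wp \<and> J \<noteq> {0}" for J
  have "P Wp" using k_ideal_killing_orth_ksum Wp0 by (simp add: P_def Wp_def)
  then obtain J where J: "P J" and Jmin: "\<And>J'. P J' \<Longrightarrow> dim J \<le> dim J'"
    using ex_has_least_nat[of P Wp dim] by blast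
  have Jk: "lie_ideal_of br k J" and JWp: "J \<subseteq> Wp" and J0: "J \<noteq> {0}"
    using J by (auto simp: P_def)
  have Jdk: "J \<subseteq> dk" using JWp by (auto simp: Wp_def)
  have "J' = {0} \<or> J' = J" if J': "lie_ideal_of br J J'" for J'
  proof -
    have "P J' \<or> J' = {0}"
      using k_ideal_of_k_ideal[OF Jk J'] J' JWp by (auto simp: P_def lie_ideal_of_def)
    then show ?thesis
    proof
      assume "P J'"
      then have "dim J \<le> dim J'" by (rule Jmin)
      then show ?thesis using subspace_dim_equal[of J' J] J' Jk by (auto simp: lie_ideal_of_def)
    qed simp
  qed
  then have "simple_lie br J" using k_ideal_in_dk_nonabelian[OF Jk Jdk J0] by (auto simp: simple_lie_def)
  moreover have "lie_ideal_of br dk J" using Jk Jdk dk_subset_k by (auto simp: lie_ideal_of_def)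
  ultimately have "J \<in> ks ` {..<r}" using decomp by (auto simp: k_decomp_def)
  then have "J \<subseteq> ksum" unfolding ksum_def by (auto intro: span_base)
  then have "J \<subseteq> {0}" using JWp Jdk dk_subset_k killing_eq_0_k by (force simp: Wp_def)
  then show False using J0 Jk subspace_0 by (auto simp: lie_ideal_of_def)
qed

lemma r_le_m: "r \<le> m"
  using decomp by (auto simp: k_decomp_def split: if_splits)

lemma ks_cases: assumes "i < m" shows "i < r \<or> (i = r \<and> ks i = zk \<and> zk \<noteq> {0})"
  using assms decomp by (cases "zk = {0}") (auto simp: k_decomp_def less_Suc_eq)

lemma k_subset_span_ks: "k \<subseteq> span (\<Union>i<m. ks i)"
proof
  fix x assume x: "x \<in> k"
  obtain t where t: "t \<in> dk" "x - t \<in> zk" using k_eq_dk_plus_zk[OF x] by blast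
  have "span (\<Union>i<r. ks i) \<subseteq> span (\<Union>i<m. ks i)" using r_le_m by (intro span_mono UN_mono) auto
  then have "t \<in> span (\<Union>i<m. ks i)" using dk_subset_ksum t by (auto simp: ksum_def)
  moreover have "x - t \<in> span (\<Union>i<m. ks i)"
  proof (cases "zk = {0}")
    case True
    then show ?thesis using t by (simp add: span_0)
  next
    case False
    then have "m = Suc r" "ks r = zk" using decomp by (auto simp: k_decomp_def)
    then show ?thesis using t by (auto intro: span_base)
  qed
  ultimately have "t + (x - t) \<in> span (\<Union>i<m. ks i)" by (rule span_add)
  then show "x \<in> span (\<Union>i<m. ks i)" by simp
qed

lemma k_ideal_ks: "i < m \<Longrightarrow> lie_ideal_of br k (ks i)"
  using ks_cases k_ideal_simple_ks k_ideal_zk by metis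

lemma ks_nonzero: "i < m \<Longrightarrow> ks i \<noteq> {0}"
  using ks_cases ks_nonzero_simple by metis

lemma subspace_ks: "i < m \<Longrightarrow> subspace (ks i)" and ks_subset_k: "i < m \<Longrightarrow> ks i \<subseteq> k"
  using k_ideal_ks by (auto simp: lie_ideal_of_def)

lemma ks_orthogonal:
  assumes i: "i < m" and j: "j < m" and ij: "i \<noteq> j" and x: "x \<in> ks i" and y: "y \<in> ks j"
  shows "br x y = 0 \<and> B x y = 0"
proof -
  have xk: "x \<in> k" and yk: "y \<in> k" using ks_subset_k i j x y by auto
  consider "i < r" "j < r" | "i < r" "j = r" "ks j = zk" | "i = r" "ks i = zk" "j < r"
    using ks_cases[OF i] ks_cases[OF j] ij by auto
  then show ?thesis
  proof cases
    case 1
    have br0: "br a b = 0" if "a \<in> ks i" "b \<in> ks j" for a b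
      using br_disjoint_k_ideals[OF k_ideal_simple_ks[OF 1(1)] k_ideal_simple_ks[OF 1(2)]
          ks_inter_simple[OF 1 ij] that] .
    then have "B x y = 0"
      using killing_simple_ideal_centralizer[OF k_ideal_simple_ks[OF 1(1)] conjunct2[OF simple_ideal_ks[OF 1(1)]] x] y
      by blast
    then show ?thesis using br0 x y by blast
  next
    case 2
    have br0: "br a y = 0" if "a \<in> k" for a
      using y 2 that br_antisym[of a y] by (auto simp: centre_def)
    have "B x y = 0"
      using killing_simple_ideal_centralizer[OF k_ideal_simple_ks[OF 2(1)] conjunct2[OF simple_ideal_ks[OF 2(1)]] x]
        br0 ks_subset_k[OF i] by blast
    then show ?thesis using br0 xk by blast
  next
    case 3
    have br0: "br x a = 0" if "a \<in> k" for a
      using x 3 that by (auto simp: centre_def)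
    have "br a x = 0" if "a \<in> k" for a using br0[OF that] br_antisym[of a x] by simp
    then have "B y x = 0"
      using killing_simple_ideal_centralizer[OF k_ideal_simple_ks[OF 3(3)] conjunct2[OF simple_ideal_ks[OF 3(3)]] y]
        ks_subset_k[OF j] by blast
    then show ?thesis using br0 yk killing_sym by metis
  qed
qed

end

section \<open>A \<open>Q\<close>-orthonormal basis adapted to \<open>\<gg> = \<kk>\<^sub>1 \<oplus> \<dots> \<oplus> \<kk>\<^sub>m \<oplus> \<pp>\<close>\<close>

context cartan_setting
begin

definition comp :: "nat \<Rightarrow> 'g set" where
  "comp j = (if j < m then ks j else p)"

definition cbasis :: "nat \<Rightarrow> 'g set" where
  "cbasis j = (SOME S. form_onb Q (comp j) S)"

definition abasis :: "'g set" where
  "abasis = (\<Union>j\<le>m. cbasis j)"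

definition cproj :: "nat \<Rightarrow> 'g \<Rightarrow> 'g" where
  "cproj j x = (\<Sum>a\<in>cbasis j. Q x a *\<^sub>R a)"

lemma comp_less [simp]: "j < m \<Longrightarrow> comp j = ks j" and comp_m [simp]: "comp m = p"
  by (simp_all add: comp_def)

lemma subspace_comp: "j \<le> m \<Longrightarrow> subspace (comp j)"
  using subspace_ks subspace_p by (auto simp: comp_def)

lemma cbasis_onb: assumes "j \<le> m" shows "form_onb Q (comp j) (cbasis j)"
proof -
  have "\<exists>S. form_onb Q (comp j) S"
    by (rule form_onb_exists[OF bilinear_Q subspace_comp[OF assms]]) (auto simp: Q_sym Q_pos)
  then show ?thesis unfolding cbasis_def by (rule someI_ex)
qed

lemma card_cbasis: "j \<le> m \<Longrightarrow> card (cbasis j) = dim (comp j)"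
  using form_onb_card[OF cbasis_onb bilinear_Q] .

lemma finite_cbasis: "j \<le> m \<Longrightarrow> finite (cbasis j)"
  and cbasis_in_comp: "j \<le> m \<Longrightarrow> a \<in> cbasis j \<Longrightarrow> a \<in> comp j"
  and Q_cbasis: "j \<le> m \<Longrightarrow> a \<in> cbasis j \<Longrightarrow> b \<in> cbasis j \<Longrightarrow> Q a b = (if a = b then 1 else 0)"
  and cproj_comp: "j \<le> m \<Longrightarrow> x \<in> comp j \<Longrightarrow> cproj j x = x"
  using cbasis_onb[of j] unfolding form_onb_def cproj_def by (blast, blast, blast, metis)

lemma Q_comp_orth:
  assumes i: "i \<le> m" and j: "j \<le> m" and ij: "i \<noteq> j" and x: "x \<in> comp i" and y: "y \<in> comp j"
  shows "Q x y = 0"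
proof -
  consider "i < m" "j < m" | "i < m" "j = m" | "i = m" "j < m"
    using i j ij by linarith
  then show ?thesis
  proof cases
    case 1
    then have "x \<in> k" "B x y = 0" using ks_orthogonal[OF 1 ij] x y ks_subset_k by (auto simp: comp_less)
    then show ?thesis using Q_k by simp
  next
    case 2
    then show ?thesis using x y Q_k_p ks_subset_k by (auto simp: comp_less comp_m)
  next
    case 3
    then show ?thesis using x y Q_k_p ks_subset_k Q_sym by (metis comp_less comp_m subsetD)
  qed
qed

lemma cbasis_disjoint: assumes "i \<le> m" "j \<le> m" "i \<noteq> j" shows "cbasis i \<inter> cbasis j = {}"
  using Q_cbasis[OF assms(1)] Q_comp_orth[OF assms] cbasis_in_comp assms by fastforce

lemma linear_cproj: "linear (cproj j)"
  unfolding cproj_def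
  by (rule linearI) (simp_all add: Q_simps scaleR_add_left sum.distrib scaleR_sum_right)

lemma cproj_other_comp:
  assumes "i \<le> m" "j \<le> m" "i \<noteq> j" "x \<in> comp i" shows "cproj j x = 0"
  unfolding cproj_def using Q_comp_orth[OF assms] cbasis_in_comp[OF assms(2)] by simp

lemma sum_cproj_comp: assumes "i \<le> m" "x \<in> comp i" shows "(\<Sum>j\<le>m. cproj j x) = x"
proof -
  have "(\<Sum>j\<le>m. cproj j x) = (\<Sum>j\<le>m. if j = i then x else 0)"
    using assms cproj_other_comp cproj_comp by (intro sum.cong) auto
  then show ?thesis using assms by simp
qed

lemma sum_cproj: "(\<Sum>j\<le>m. cproj j x) = x"
proof -
  have lin: "linear (\<lambda>x. (\<Sum>j\<le>m. cproj j x) - x)"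
    by (rule linearI) (simp_all add: linear_add[OF linear_cproj] linear_scale[OF linear_cproj]
        sum.distrib scaleR_sum_right algebra_simps)
  have "K x \<in> span (\<Union>i<m. ks i)" using k_subset_span_ks projk_in_k by blast
  then have "(\<Sum>j\<le>m. cproj j (K x)) - K x = 0"
  proof (rule span_induct[where P="\<lambda>y. (\<Sum>j\<le>m. cproj j y) - y = 0"])
    show "subspace {y. (\<Sum>j\<le>m. cproj j y) - y = 0}" by (rule linear_subspace_kernel[OF lin])
    fix y assume "y \<in> (\<Union>i<m. ks i)"
    then obtain i where "i < m" "y \<in> comp i" by (auto simp: comp_less)
    then show "(\<Sum>j\<le>m. cproj j y) - y = 0" using sum_cproj_comp[of i y] by simp
  qed
  moreover have "(\<Sum>j\<le>m. cproj j (x - K x)) = x - K x"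
    using sum_cproj_comp[of m "x - K x"] diff_projk_in_p by simp
  ultimately show ?thesis
    by (simp add: linear_diff[OF linear_cproj] sum_subtractf)
qed

lemma finite_abasis: "finite abasis"
  unfolding abasis_def using finite_cbasis by auto

lemma sum_abasis: "(\<Sum>a\<in>abasis. f a) = (\<Sum>j\<le>m. \<Sum>a\<in>cbasis j. f a)"
  unfolding abasis_def by (rule sum.UNION_disjoint) (auto simp: finite_cbasis dest: cbasis_disjoint)

lemma abasis_onb: "form_onb Q UNIV abasis"
  unfolding form_onb_def
proof (intro conjI ballI)
  fix a b assume "a \<in> abasis" "b \<in> abasis"
  then obtain i j where ij: "i \<le> m" "a \<in> cbasis i" "j \<le> m" "b \<in> cbasis j" by (auto simp: abasis_def)
  show "Q a b = (if a = b then 1 else 0)"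
  proof (cases "i = j")
    case False
    then have "a \<noteq> b" using cbasis_disjoint ij by blast
    then show ?thesis using Q_comp_orth[OF ij(1,3) False] cbasis_in_comp ij by auto
  qed (use ij Q_cbasis in auto)
next
  fix x :: 'g
  show "x = (\<Sum>a\<in>abasis. Q x a *\<^sub>R a)" using sum_cproj[of x] by (simp add: sum_abasis cproj_def)
qed (simp_all add: finite_abasis)

lemma Q_abasis: "a \<in> abasis \<Longrightarrow> b \<in> abasis \<Longrightarrow> Q a b = (if a = b then 1 else 0)"
  using abasis_onb by (simp add: form_onb_def)

lemma qproj_comp: assumes j: "j \<le> m" shows "qproj br k (comp j) x = cproj j x"
proof -
  have a: "cproj j x \<in> comp j" "\<forall>w\<in>comp j. Q (x - cproj j x) w = 0"
    using form_onb_proj[OF cbasis_onb[OF j] bilinear_Q subspace_comp[OF j]] by (auto simp: cproj_def)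
  show ?thesis unfolding qproj_def
  proof (rule the_equality)
    show "cproj j x \<in> comp j \<and> (\<forall>w\<in>comp j. Q (x - cproj j x) w = 0)" using a by blast
    fix u assume "u \<in> comp j \<and> (\<forall>w\<in>comp j. Q (x - u) w = 0)"
    then show "u = cproj j x"
      using form_proj_unique[OF subspace_comp[OF j] bilinear_Q _ _ _ a] Q_pos by force
  qed
qed

lemma Q_cproj: assumes j: "j \<le> m" shows "Q (cproj j x) (cproj j y) = (\<Sum>a\<in>cbasis j. Q x a * Q y a)"
proof -
  have "Q (cproj j x) (cproj j y) = (\<Sum>a\<in>cbasis j. Q y a * Q (cproj j x) a)"
    unfolding cproj_def[of j y] using bilinear_Q
    by (simp add: bilinear_def linear_sum Q_simps)
  also have "\<dots> = (\<Sum>a\<in>cbasis j. Q x a * Q y a)"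
    using form_onb_coeff[OF cbasis_onb[OF j] bilinear_Q] by (intro sum.cong) (auto simp: cproj_def)
  finally show ?thesis .
qed

definition comp_weight :: "real \<Rightarrow> (nat \<Rightarrow> real) \<Rightarrow> nat \<Rightarrow> real" where
  "comp_weight c0 c j = (if j < m then c j else c0)"

lemma kform_cbasis:
  "kform br k ks m c0 c x y = (\<Sum>j\<le>m. comp_weight c0 c j * (\<Sum>a\<in>cbasis j. Q x a * Q y a))"
proof -
  have "kform br k ks m c0 c x y = c0 * Qres br k (comp m) x y + (\<Sum>i<m. c i * Qres br k (comp i) x y)"
    by (simp add: kform_def)
  also have "\<dots> = (\<Sum>j\<le>m. comp_weight c0 c j * (\<Sum>a\<in>cbasis j. Q x a * Q y a))"
    by (simp del: comp_less comp_m add: Qres_def qproj_comp Q_cproj lessThan_Suc_atMost[symmetric]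
        comp_weight_def)
  finally show ?thesis .
qed

definition comp_index :: "'g \<Rightarrow> nat" where
  "comp_index a = (THE j. j \<le> m \<and> a \<in> cbasis j)"

lemma comp_index: "j \<le> m \<Longrightarrow> a \<in> cbasis j \<Longrightarrow> comp_index a = j"
  unfolding comp_index_def using cbasis_disjoint by (intro the_equality) auto

lemma abasis_comp_index: "a \<in> abasis \<Longrightarrow> comp_index a \<le> m \<and> a \<in> cbasis (comp_index a)"
  using comp_index by (auto simp: abasis_def)

lemma kform_abasis:
  "kform br k ks m c0 c x y = (\<Sum>a\<in>abasis. comp_weight c0 c (comp_index a) * Q x a * Q y a)"
  unfolding kform_cbasis sum_abasis
  by (intro sum.cong refl) (auto simp: comp_index sum_distrib_left mult.assoc)

lemma bilinear_kform: "bilinear (kform br k ks m c0 c)"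
  unfolding bilinear_def kform_abasis
  by (simp add: linear_iff Q_simps sum.distrib sum_distrib_left algebra_simps)

end

section \<open>Structure constants in the adapted basis\<close>

text \<open>The triples of components \<open>(i, j, l)\<close> for which \<open>Q([\<gg>\<^sub>i, \<gg>\<^sub>j], \<gg>\<^sub>l)\<close> may be nonzero, where
  \<open>\<gg>\<^sub>m = \<pp>\<close>: this is \<open>[\<kk>\<^sub>i, \<kk>\<^sub>j] = 0\<close> for \<open>i \<noteq> j\<close>, \<open>[\<kk>\<^sub>i, \<pp>] \<subseteq> \<pp>\<close> and \<open>[\<pp>, \<pp>] \<subseteq> \<kk>\<close>.\<close>
definition admissible :: "nat \<Rightarrow> nat \<Rightarrow> nat \<Rightarrow> nat \<Rightarrow> bool" where
  "admissible m i j l \<longleftrightarrow> (i < m \<and> j = i \<and> l = i) \<or> (i < m \<and> j = m \<and> l = m)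
     \<or> (i = m \<and> j < m \<and> l = m) \<or> (i = m \<and> j = m \<and> l < m)"

lemma sum_admissible:
  fixes G :: "nat \<Rightarrow> nat \<Rightarrow> nat \<Rightarrow> real"
  assumes G: "\<And>i j l. i \<le> m \<Longrightarrow> j \<le> m \<Longrightarrow> l \<le> m \<Longrightarrow> \<not> admissible m i j l \<Longrightarrow> G i j l = 0"
  shows "(\<Sum>j\<le>m. \<Sum>i\<le>m. \<Sum>l\<le>m. G i j l) = (\<Sum>i<m. G i i i + G i m m + G m i m + G m m i)"
proof -
  have atMost_m: "{..m} = insert m {..<m}" by auto
  have diag: "(\<Sum>i<m. \<Sum>l<m. G i j l) = G j j j" if j: "j < m" for j
  proof -
    have "(\<Sum>l<m. G i j l) = (if i = j then G j j j else 0)" if i: "i < m" for i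
    proof -
      have "(\<Sum>l<m. G i j l) = (\<Sum>l<m. if l = i \<and> i = j then G j j j else 0)"
        using i j G by (intro sum.cong) (auto simp: admissible_def)
      then show ?thesis using i by (simp add: sum.delta' split: if_splits)
    qed
    then show ?thesis using j by (simp add: sum.delta')
  qed
  have "(\<Sum>i<m. G i j m) = 0" "(\<Sum>l<m. G m j l) = 0" if "j < m" for j
    using that G by (auto intro!: sum.neutral simp: admissible_def)
  moreover have "(\<Sum>i<m. \<Sum>l<m. G i m l) = 0" "G m m m = 0"
    using G by (auto intro!: sum.neutral simp: admissible_def)
  ultimately show ?thesis
    unfolding atMost_m using diag by (simp add: sum.distrib)
qed

lemma sum_admissible_row:
  fixes G :: "nat \<Rightarrow> nat \<Rightarrow> real"
  assumes i: "i \<le> m" and G: "\<And>j l. j \<le> m \<Longrightarrow> l \<le> m \<Longrightarrow> \<not> admissible m i j l \<Longrightarrow> G j l = 0"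
  shows "(\<Sum>j\<le>m. \<Sum>l\<le>m. G j l) = (if i < m then G i i + G m m else (\<Sum>j<m. G j m + G m j))"
proof -
  define G' where "G' i' j l = (if i' = i then G j l else 0)" for i' j l
  have "(\<Sum>l\<le>m. G' i' j l) = (if i' = i then (\<Sum>l\<le>m. G j l) else 0)" for i' j
    by (simp add: G'_def)
  then have "(\<Sum>j\<le>m. \<Sum>l\<le>m. G j l) = (\<Sum>j\<le>m. \<Sum>i'\<le>m. \<Sum>l\<le>m. G' i' j l)"
    using i by (simp add: sum.delta')
  also have "\<dots> = (\<Sum>i'<m. G' i' i' i' + G' i' m m + G' m i' m + G' m m i')"
    by (rule sum_admissible) (auto simp: G'_def G)
  also have "\<dots> = (if i < m then G i i + G m m else (\<Sum>j<m. G j m + G m j))"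
    using i by (cases "i < m") (simp_all add: G'_def sum.distrib)
  finally show ?thesis .
qed

context cartan_setting
begin

definition comp_sign :: "nat \<Rightarrow> real" where
  "comp_sign j = (if j < m then -1 else 1)"

definition sc_sum :: "nat \<Rightarrow> nat \<Rightarrow> nat \<Rightarrow> real" where
  "sc_sum i j l = (\<Sum>a\<in>cbasis i. \<Sum>b\<in>cbasis j. \<Sum>d\<in>cbasis l. (Q (br a b) d)\<^sup>2)"

lemma Q_br_comp_inadmissible:
  assumes i: "i \<le> m" and j: "j \<le> m" and l: "l \<le> m" and na: "\<not> admissible m i j l"
    and x: "x \<in> comp i" and y: "y \<in> comp j" and w: "w \<in> comp l"
  shows "Q (br x y) w = 0"
proof -
  have Q_comp: "Q (br x y) w = 0" if "i' \<le> m" "i' \<noteq> l" "br x y \<in> comp i'" for i'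
    using Q_comp_orth[OF that(1) l that(2,3) w] .
  consider "i < m" "j < m" "i \<noteq> j" | "i < m" "j = i" | "i < m" "j = m" | "i = m" "j < m" | "i = m" "j = m"
    using i j by linarith
  then show ?thesis
  proof cases
    case 1
    then show ?thesis using ks_orthogonal[OF 1(1,2,3)] x y by (simp add: Q_simps)
  next
    case 2
    then have "br x y \<in> comp i"
      using k_ideal_ks[OF 2(1)] x y ks_subset_k by (auto simp: lie_ideal_of_def)
    moreover have "i \<noteq> l" using 2 na by (auto simp: admissible_def)
    ultimately show ?thesis using Q_comp i by blast
  next
    case 3
    then show ?thesis using Q_comp[of m] br_k_p x y ks_subset_k na l by (auto simp: admissible_def)
  next
    case 4
    then show ?thesis using Q_comp[of m] br_p_k x y ks_subset_k na l by (auto simp: admissible_def)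
  next
    case 5
    then have "l = m" using na l by (auto simp: admissible_def)
    then show ?thesis using 5 br_p_p x y w Q_k_p by auto
  qed
qed

lemma sc_sum_inadmissible:
  assumes "i \<le> m" "j \<le> m" "l \<le> m" "\<not> admissible m i j l" shows "sc_sum i j l = 0"
  unfolding sc_sum_def
  using Q_br_comp_inadmissible[OF assms cbasis_in_comp[OF assms(1)] cbasis_in_comp[OF assms(2)]
      cbasis_in_comp[OF assms(3)]] by simp

text \<open>\<open>ad x\<close> is \<open>Q\<close>-skew for \<open>x \<in> \<kk>\<close> and \<open>Q\<close>-symmetric for \<open>x \<in> \<pp>\<close>; in the inadmissible cases
  both sides vanish.\<close>
lemma Q_br_abasis_sign:
  assumes a: "a \<in> abasis" and b: "b \<in> abasis" and d: "d \<in> abasis"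
  shows "Q (br a d) b = - (comp_sign (comp_index b) * comp_sign (comp_index d)) * Q (br a b) d"
proof -
  let ?i = "comp_index a" and ?j = "comp_index b" and ?l = "comp_index d"
  have in_comp: "?i \<le> m" "a \<in> comp ?i" "?j \<le> m" "b \<in> comp ?j" "?l \<le> m" "d \<in> comp ?l"
    using abasis_comp_index a b d cbasis_in_comp by blast+
  have vanish: "Q (br a b) d = 0 \<and> Q (br a d) b = 0"
    if "\<not> admissible m ?i ?j ?l" "\<not> admissible m ?i ?l ?j"
    using Q_br_comp_inadmissible in_comp that by blast
  show ?thesis
  proof (cases "?i < m")
    case True
    then have "Q (br a d) b = - Q (br a b) d"
      using Q_br_k_skew[of a d b] in_comp ks_subset_k Q_sym by (metis comp_less subsetD)
    then show ?thesis
      using vanish True by (cases "?j < m"; cases "?l < m") (auto simp: comp_sign_def admissible_def)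
  next
    case False
    then have "?i = m" using in_comp by simp
    then have "Q (br a d) b = Q (br a b) d"
      using Q_br_p_sym[of a d b] in_comp Q_sym by (metis comp_m)
    then show ?thesis
      using vanish \<open>?i = m\<close> by (cases "?j < m"; cases "?l < m") (auto simp: comp_sign_def admissible_def)
  qed
qed

lemma sum_abasis3:
  fixes f :: "nat \<Rightarrow> nat \<Rightarrow> nat \<Rightarrow> real"
  shows "(\<Sum>b\<in>abasis. \<Sum>a\<in>abasis. \<Sum>d\<in>abasis. f (comp_index a) (comp_index b) (comp_index d) * g a b d)
     = (\<Sum>j\<le>m. \<Sum>i\<le>m. \<Sum>l\<le>m. f i j l * (\<Sum>a\<in>cbasis i. \<Sum>b\<in>cbasis j. \<Sum>d\<in>cbasis l. g a b d))"
proof -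
  have "(\<Sum>b\<in>abasis. \<Sum>a\<in>abasis. \<Sum>d\<in>abasis. f (comp_index a) (comp_index b) (comp_index d) * g a b d)
      = (\<Sum>j\<le>m. \<Sum>b\<in>cbasis j. \<Sum>i\<le>m. \<Sum>a\<in>cbasis i. \<Sum>l\<le>m. \<Sum>d\<in>cbasis l. f i j l * g a b d)"
    unfolding sum_abasis by (intro sum.cong refl) (simp add: comp_index)
  also have "\<dots> = (\<Sum>j\<le>m. \<Sum>i\<le>m. \<Sum>l\<le>m. \<Sum>a\<in>cbasis i. \<Sum>b\<in>cbasis j. \<Sum>d\<in>cbasis l. f i j l * g a b d)"
  proof (intro sum.cong refl)
    fix j
    have "(\<Sum>b\<in>cbasis j. \<Sum>i\<le>m. \<Sum>a\<in>cbasis i. \<Sum>l\<le>m. \<Sum>d\<in>cbasis l. f i j l * g a b d)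
        = (\<Sum>i\<le>m. \<Sum>b\<in>cbasis j. \<Sum>a\<in>cbasis i. \<Sum>l\<le>m. \<Sum>d\<in>cbasis l. f i j l * g a b d)"
      by (rule sum.swap)
    also have "\<dots> = (\<Sum>i\<le>m. \<Sum>a\<in>cbasis i. \<Sum>b\<in>cbasis j. \<Sum>l\<le>m. \<Sum>d\<in>cbasis l. f i j l * g a b d)"
      by (rule sum.cong[OF refl], rule sum.swap)
    also have "\<dots> = (\<Sum>i\<le>m. \<Sum>a\<in>cbasis i. \<Sum>l\<le>m. \<Sum>b\<in>cbasis j. \<Sum>d\<in>cbasis l. f i j l * g a b d)"
      by (rule sum.cong[OF refl], rule sum.cong[OF refl], rule sum.swap)
    also have "\<dots> = (\<Sum>i\<le>m. \<Sum>l\<le>m. \<Sum>a\<in>cbasis i. \<Sum>b\<in>cbasis j. \<Sum>d\<in>cbasis l. f i j l * g a b d)"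
      by (rule sum.cong[OF refl], rule sum.swap)
    finally show "(\<Sum>b\<in>cbasis j. \<Sum>i\<le>m. \<Sum>a\<in>cbasis i. \<Sum>l\<le>m. \<Sum>d\<in>cbasis l. f i j l * g a b d)
        = (\<Sum>i\<le>m. \<Sum>l\<le>m. \<Sum>a\<in>cbasis i. \<Sum>b\<in>cbasis j. \<Sum>d\<in>cbasis l. f i j l * g a b d)" .
  qed
  also have "\<dots> = (\<Sum>j\<le>m. \<Sum>i\<le>m. \<Sum>l\<le>m. f i j l * (\<Sum>a\<in>cbasis i. \<Sum>b\<in>cbasis j. \<Sum>d\<in>cbasis l. g a b d))"
    by (simp only: sum_distrib_left)
  finally show ?thesis .
qed

definition block_weight :: "real \<Rightarrow> (nat \<Rightarrow> real) \<Rightarrow> nat \<Rightarrow> nat \<Rightarrow> nat \<Rightarrow> real" where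
  "block_weight c0 c i j l = scal_weight (comp_weight c0 c i) (comp_weight c0 c j) (comp_weight c0 c l)
     (comp_sign i) (comp_sign j) (comp_sign l)"

lemma scal_kform_sc_sum:
  assumes c0: "c0 > 0" and c: "\<forall>i<m. c i > 0"
  shows "scal (kform br k ks m c0 c) br = (\<Sum>i<m. block_weight c0 c i i i * sc_sum i i i
     + block_weight c0 c i m m * sc_sum i m m + block_weight c0 c m i m * sc_sum m i m
     + block_weight c0 c m m i * sc_sum m m i)"
proof -
  have "comp_weight c0 c (comp_index a) > 0" if "a \<in> abasis" for a
    using abasis_comp_index[OF that] c0 c by (auto simp: comp_weight_def)
  then interpret dm: diagonal_metric br Q abasis "\<lambda>a. comp_weight c0 c (comp_index a)"
    by unfold_locales (auto simp: bilinear_Q Q_sym abasis_onb)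
  have metric: "kform br k ks m c0 c = dm.metric"
    by (intro ext) (simp add: kform_abasis dm.metric_def)
  have sign: "dm.sc a d b = - (comp_sign (comp_index b) * comp_sign (comp_index d)) * dm.sc a b d"
    if "a \<in> abasis" "b \<in> abasis" "d \<in> abasis" for a b d
    unfolding dm.sc_def by (rule Q_br_abasis_sign[OF that])
  have "scal (kform br k ks m c0 c) br = (\<Sum>b\<in>abasis. \<Sum>a\<in>abasis. \<Sum>d\<in>abasis. (dm.sc a b d)\<^sup>2 *
     scal_weight (comp_weight c0 c (comp_index a)) (comp_weight c0 c (comp_index b))
       (comp_weight c0 c (comp_index d)) (comp_sign (comp_index a)) (comp_sign (comp_index b))
       (comp_sign (comp_index d)))"
    unfolding metric by (rule dm.scal_metric_signed[OF sign])
  also have "\<dots> = (\<Sum>b\<in>abasis. \<Sum>a\<in>abasis. \<Sum>d\<in>abasis.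
     block_weight c0 c (comp_index a) (comp_index b) (comp_index d) * (Q (br a b) d)\<^sup>2)"
    unfolding dm.sc_def block_weight_def by (simp only: mult.commute)
  also have "\<dots> = (\<Sum>j\<le>m. \<Sum>i\<le>m. \<Sum>l\<le>m. block_weight c0 c i j l * sc_sum i j l)"
    unfolding sc_sum_def by (rule sum_abasis3)
  also have "\<dots> = (\<Sum>i<m. block_weight c0 c i i i * sc_sum i i i
     + block_weight c0 c i m m * sc_sum i m m + block_weight c0 c m i m * sc_sum m i m
     + block_weight c0 c m m i * sc_sum m m i)"
    by (rule sum_admissible) (simp add: sc_sum_inadmissible)
  finally show ?thesis .
qed

lemma sum_abasis2:
  "(\<Sum>c\<in>abasis. \<Sum>d\<in>abasis. f c d) = (\<Sum>j\<le>m. \<Sum>l\<le>m. \<Sum>c\<in>cbasis j. \<Sum>d\<in>cbasis l. f c d)"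
  unfolding sum_abasis by (rule sum.cong[OF refl], rule sum.swap)

lemma Q_self_abasis: "Q u u = (\<Sum>d\<in>abasis. (Q u d)\<^sup>2)"
proof -
  have "Q u u = Q u (\<Sum>d\<in>abasis. Q u d *\<^sub>R d)" using abasis_onb by (simp add: form_onb_def)
  also have "\<dots> = (\<Sum>d\<in>abasis. (Q u d)\<^sup>2)"
    using bilinear_Q by (simp add: bilinear_def linear_sum Q_simps power2_eq_square)
  finally show ?thesis .
qed

lemma killing_abasis: "B x y = (\<Sum>c\<in>abasis. Q (br x (br y c)) c)"
  unfolding killing_def by (rule trace_end_form_onb[OF abasis_onb linear_br_br linear_Q_left])

text \<open>Each row of structure constants has length \<open>|Q(a,a)| = |B(a,a)| = 1\<close>.\<close>
lemma sc_row:
  assumes a: "a \<in> abasis" shows "(\<Sum>c\<in>abasis. \<Sum>d\<in>abasis. (Q (br a c) d)\<^sup>2) = 1"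
proof -
  have i: "comp_index a \<le> m" "a \<in> comp (comp_index a)"
    using abasis_comp_index[OF a] cbasis_in_comp by auto
  have "1 = Q a a" using Q_abasis[OF a a] by simp
  also have "\<dots> = (\<Sum>c\<in>abasis. Q (br a c) (br a c))"
  proof (cases "comp_index a < m")
    case True
    then have "a \<in> k" using i ks_subset_k by (metis comp_less subsetD)
    then show ?thesis
      unfolding Q_k[OF \<open>a \<in> k\<close>] killing_abasis by (simp add: Q_br_k_skew Q_sym sum_negf[symmetric])
  next
    case False
    then have "a \<in> p" using i by (metis comp_m le_neq_implies_less)
    then show ?thesis
      unfolding Q_p[OF \<open>a \<in> p\<close>] killing_abasis by (simp add: Q_br_p_sym Q_sym)
  qed
  also have "\<dots> = (\<Sum>c\<in>abasis. \<Sum>d\<in>abasis. (Q (br a c) d)\<^sup>2)"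
    by (simp add: Q_self_abasis)
  finally show ?thesis by simp
qed

lemma card_cbasis_sc_sum:
  assumes i: "i \<le> m" shows "real (card (cbasis i)) = (\<Sum>j\<le>m. \<Sum>l\<le>m. sc_sum i j l)"
proof -
  have "(\<Sum>a\<in>cbasis i. \<Sum>c\<in>abasis. \<Sum>d\<in>abasis. (Q (br a c) d)\<^sup>2) = (\<Sum>a\<in>cbasis i. 1)"
    using i by (intro sum.cong refl sc_row) (auto simp: abasis_def)
  then have "real (card (cbasis i)) = (\<Sum>a\<in>cbasis i. \<Sum>c\<in>abasis. \<Sum>d\<in>abasis. (Q (br a c) d)\<^sup>2)"
    by simp
  also have "\<dots> = (\<Sum>a\<in>cbasis i. \<Sum>j\<le>m. \<Sum>l\<le>m. \<Sum>c\<in>cbasis j. \<Sum>d\<in>cbasis l. (Q (br a c) d)\<^sup>2)"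
    by (simp only: sum_abasis2)
  also have "\<dots> = (\<Sum>j\<le>m. \<Sum>l\<le>m. sc_sum i j l)"
    unfolding sc_sum_def by (subst sum.swap, rule sum.cong[OF refl], rule sum.swap)
  finally show ?thesis .
qed

lemma card_ks_sc_sum:
  assumes "i < m" shows "real (card (cbasis i)) = sc_sum i i i + sc_sum i m m"
proof -
  have "(\<Sum>j\<le>m. \<Sum>l\<le>m. sc_sum i j l) = sc_sum i i i + sc_sum i m m"
    using sum_admissible_row[of i m "sc_sum i", OF _ sc_sum_inadmissible] assms by simp
  then show ?thesis using card_cbasis_sc_sum assms by simp
qed

lemma card_p_sc_sum: "real (card (cbasis m)) = (\<Sum>i<m. sc_sum m i m + sc_sum m m i)"
proof -
  have "(\<Sum>j\<le>m. \<Sum>l\<le>m. sc_sum m j l) = (\<Sum>i<m. sc_sum m i m + sc_sum m m i)"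
    using sum_admissible_row[of m m "sc_sum m", OF _ sc_sum_inadmissible] by simp
  then show ?thesis using card_cbasis_sc_sum by simp
qed

lemma sc_sum_pkp: "sc_sum m i m = sc_sum i m m"
proof -
  have "sc_sum m i m = (\<Sum>a\<in>cbasis m. \<Sum>b\<in>cbasis i. \<Sum>d\<in>cbasis m. (Q (br b a) d)\<^sup>2)"
    unfolding sc_sum_def
  proof (intro sum.cong refl)
    fix a b d
    have "Q (br a b) d = - Q (br b a) d" using br_antisym[of a b] by (simp add: Q_simps)
    then show "(Q (br a b) d)\<^sup>2 = (Q (br b a) d)\<^sup>2" by simp
  qed
  also have "\<dots> = sc_sum i m m" unfolding sc_sum_def by (rule sum.swap)
  finally show ?thesis .
qed

lemma sc_sum_ppk: assumes i: "i < m" shows "sc_sum m m i = sc_sum m i m"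
proof -
  have "sc_sum m m i = (\<Sum>a\<in>cbasis m. \<Sum>b\<in>cbasis m. \<Sum>d\<in>cbasis i. (Q (br a d) b)\<^sup>2)"
    unfolding sc_sum_def
  proof (intro sum.cong refl)
    fix a b d assume "a \<in> cbasis m" "b \<in> cbasis m" "d \<in> cbasis i"
    moreover from this have "a \<in> abasis" "b \<in> abasis" "d \<in> abasis" using i by (auto simp: abasis_def)
    ultimately show "(Q (br a b) d)\<^sup>2 = (Q (br a d) b)\<^sup>2"
      using Q_br_abasis_sign[of a b d] i by (simp add: comp_index comp_sign_def)
  qed
  also have "\<dots> = sc_sum m i m"
    unfolding sc_sum_def by (rule sum.cong[OF refl], rule sum.swap)
  finally show ?thesis .
qed

definition killing_comp :: "nat \<Rightarrow> 'g \<Rightarrow> 'g \<Rightarrow> real" where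
  "killing_comp i x y = (\<Sum>c\<in>cbasis i. Q (br x (br y c)) c)"

lemma killing_on_eq_killing_comp:
  assumes i: "i < m" shows "killing_on br k (ks i) x y = killing_comp i x y"
proof -
  have lin: "linear (\<lambda>v. br x (br y (cproj i v)))"
    using linear_compose[OF linear_cproj linear_br_br] by (simp add: o_def)
  have "killing_on br k (ks i) x y = (\<Sum>c\<in>abasis. Q (br x (br y (cproj i c))) c)"
    unfolding killing_on_def using qproj_comp[of i] i
    by (simp add: trace_end_form_onb[OF abasis_onb lin linear_Q_left])
  also have "\<dots> = (\<Sum>j\<le>m. if j = i then killing_comp i x y else 0)"
    unfolding sum_abasis
  proof (intro sum.cong refl)
    fix j assume j: "j \<in> {..m}"
    show "(\<Sum>c\<in>cbasis j. Q (br x (br y (cproj i c))) c) = (if j = i then killing_comp i x y else 0)"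
    proof (cases "j = i")
      case True
      have "(\<Sum>c\<in>cbasis j. Q (br x (br y (cproj i c))) c) = killing_comp i x y"
        unfolding killing_comp_def True using i cproj_comp[of i] cbasis_in_comp[of i]
        by (intro sum.cong refl) (simp del: comp_less)
      then show ?thesis using True by simp
    next
      case False
      then have "cproj i c = 0" if "c \<in> cbasis j" for c
        using cproj_other_comp[OF _ _ False cbasis_in_comp] that j i by simp
      then show ?thesis using False by (simp add: br_simps Q_simps)
    qed
  qed
  also have "\<dots> = killing_comp i x y" using i by simp
  finally show ?thesis .
qed

lemma bilinear_killing_comp: "bilinear (killing_comp i)"
  unfolding bilinear_def killing_comp_def
  by (simp add: linear_iff br_simps Q_simps sum.distrib sum_distrib_left)

lemmas killing_comp_simps = bilinear_ladd[OF bilinear_killing_comp]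
  bilinear_radd[OF bilinear_killing_comp] bilinear_lmul[OF bilinear_killing_comp]
  bilinear_rmul[OF bilinear_killing_comp] bilinear_lsub[OF bilinear_killing_comp]
  bilinear_rsub[OF bilinear_killing_comp] bilinear_lneg[OF bilinear_killing_comp]
  bilinear_rneg[OF bilinear_killing_comp] bilinear_lzero[OF bilinear_killing_comp]
  bilinear_rzero[OF bilinear_killing_comp]

lemma killing_comp_k: "x \<in> k \<Longrightarrow> killing_comp i x y = - (\<Sum>c\<in>cbasis i. Q (br x c) (br y c))"
  unfolding killing_comp_def by (simp add: Q_br_k_skew Q_sym sum_negf[symmetric])

lemma killing_comp_sym: "x \<in> k \<Longrightarrow> y \<in> k \<Longrightarrow> killing_comp i x y = killing_comp i y x"
  using killing_comp_k[of x i y] killing_comp_k[of y i x] by (simp add: Q_sym)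

lemma br_ks_cbasis:
  assumes i: "i < m" and w: "w \<in> ks i" and c: "c \<in> cbasis i" shows "br w c \<in> ks i"
proof -
  have "c \<in> ks i" using cbasis_in_comp[OF _ c] i by simp
  then show ?thesis using k_ideal_ks[OF i] w ks_subset_k[OF i] by (auto simp: lie_ideal_of_def)
qed

lemma killing_comp_diag:
  assumes i: "i < m" and a: "a \<in> cbasis i"
  shows "killing_comp i a a = - (\<Sum>c\<in>cbasis i. \<Sum>d\<in>cbasis i. (Q (br a c) d)\<^sup>2)"
proof -
  have "a \<in> ks i" using cbasis_in_comp[OF _ a] i by simp
  then have "Q (br a c) (br a c) = (\<Sum>d\<in>cbasis i. (Q (br a c) d)\<^sup>2)" if c: "c \<in> cbasis i" for c
    using Q_cproj[of i "br a c" "br a c"] cproj_comp[of i "br a c"] br_ks_cbasis[OF i _ c] i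
    by (simp add: power2_eq_square)
  then show ?thesis using killing_comp_k[of a i a] \<open>a \<in> ks i\<close> ks_subset_k[OF i] by auto
qed

text \<open>\<open>ad w\<close> is \<open>Q\<close>-skew and preserves \<open>\<kk>\<^sub>i\<close>, so \<open>tr(A \<circ> ad w) = - tr(ad w \<circ> A)\<close> on \<open>\<kk>\<^sub>i\<close>.\<close>
lemma sum_cbasis_Q_br_skew:
  assumes i: "i < m" and w: "w \<in> ks i" and A: "linear A"
  shows "(\<Sum>c\<in>cbasis i. Q (A c) (br w c)) = - (\<Sum>c\<in>cbasis i. Q (A (br w c)) c)"
proof -
  have wk: "w \<in> k" using w ks_subset_k[OF i] by auto
  have expand: "br w c = (\<Sum>c'\<in>cbasis i. Q (br w c) c' *\<^sub>R c')" if c: "c \<in> cbasis i" for c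
    using cproj_comp[of i "br w c"] br_ks_cbasis[OF i w c] i by (simp add: cproj_def)
  have QA: "linear (\<lambda>v. Q (A v) u)" for u using linear_compose[OF A linear_Q_left] by (simp add: o_def)
  have lhs: "(\<Sum>c\<in>cbasis i. Q (A c) (br w c)) = (\<Sum>c\<in>cbasis i. \<Sum>c'\<in>cbasis i. Q (br w c) c' * Q (A c) c')"
  proof (intro sum.cong refl)
    fix c assume c: "c \<in> cbasis i"
    have "Q (A c) (br w c) = Q (A c) (\<Sum>c'\<in>cbasis i. Q (br w c) c' *\<^sub>R c')" using expand[OF c] by metis
    also have "\<dots> = (\<Sum>c'\<in>cbasis i. Q (A c) (Q (br w c) c' *\<^sub>R c'))"
      using bilinear_Q by (simp add: bilinear_def linear_sum)
    finally show "Q (A c) (br w c) = (\<Sum>c'\<in>cbasis i. Q (br w c) c' * Q (A c) c')" by (simp add: Q_simps)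
  qed
  have skew: "Q (br w c) c' = - Q (br w c') c" for c c'
    using Q_br_k_skew[OF wk, of c c'] Q_sym[of c "br w c'"] by simp
  have "(\<Sum>c\<in>cbasis i. Q (A (br w c)) c) = (\<Sum>c\<in>cbasis i. \<Sum>c'\<in>cbasis i. Q (br w c) c' * Q (A c') c)"
  proof (intro sum.cong refl)
    fix c assume c: "c \<in> cbasis i"
    have "Q (A (br w c)) c = Q (A (\<Sum>c'\<in>cbasis i. Q (br w c) c' *\<^sub>R c')) c" using expand[OF c] by metis
    then show "Q (A (br w c)) c = (\<Sum>c'\<in>cbasis i. Q (br w c) c' * Q (A c') c)"
      by (simp add: linear_sum[OF QA] linear_scale[OF A] Q_simps)
  qed
  also have "\<dots> = - (\<Sum>c\<in>cbasis i. \<Sum>c'\<in>cbasis i. Q (br w c') c * Q (A c') c)"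
  proof -
    have "Q (br w c) c' * Q (A c') c = - (Q (br w c') c * Q (A c') c)" for c c'
      using skew[of c c'] by simp
    then show ?thesis by (simp add: sum_negf)
  qed
  also have "\<dots> = - (\<Sum>c\<in>cbasis i. Q (A c) (br w c))"
    unfolding lhs by (subst sum.swap) (rule refl)
  finally show ?thesis by simp
qed

lemma killing_comp_invariant:
  assumes i: "i < m" and w: "w \<in> ks i"
  shows "killing_comp i (br w x) y = - killing_comp i x (br w y)"
proof -
  have wk: "w \<in> k" using w ks_subset_k[OF i] by auto
  define M where "M v = br x (br y v)" for v
  have "killing_comp i (br w x) y
      = (\<Sum>c\<in>cbasis i. Q (br w (M c)) c) - (\<Sum>c\<in>cbasis i. Q (br x (br w (br y c))) c)"
    unfolding killing_comp_def M_def br_jacobi by (simp add: Q_simps sum_subtractf)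
  moreover have "killing_comp i x (br w y)
      = (\<Sum>c\<in>cbasis i. Q (br x (br w (br y c))) c) - (\<Sum>c\<in>cbasis i. Q (M (br w c)) c)"
    unfolding killing_comp_def M_def br_jacobi by (simp add: Q_simps br_simps sum_subtractf)
  moreover have "(\<Sum>c\<in>cbasis i. Q (br w (M c)) c) = - (\<Sum>c\<in>cbasis i. Q (M c) (br w c))"
    by (simp add: Q_br_k_skew[OF wk] sum_negf[symmetric])
  moreover have "linear M" unfolding M_def by (rule linear_br_br)
  ultimately show ?thesis using sum_cbasis_Q_br_skew[OF i w, of M] by simp
qed

text \<open>Schur's lemma for the invariant forms \<open>B\<^sub>i\<close> and \<open>Q\<close> on the simple ideal \<open>\<kk>\<^sub>i\<close>: the radical of
  \<open>B\<^sub>i - \<mu> Q\<close>, for \<open>\<mu>\<close> the maximum of \<open>B\<^sub>i(x,x)/Q(x,x)\<close>, is a nonzero ideal.\<close>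
lemma killing_comp_proportional_simple:
  assumes i: "i < r" shows "\<exists>\<mu>. \<forall>x\<in>ks i. \<forall>y\<in>ks i. killing_comp i x y = \<mu> * Q x y"
proof -
  have im: "i < m" using i r_le_m by simp
  obtain x1 where "x1 \<in> ks i" "x1 \<noteq> 0" using ks_nonzero[OF im] subspace_0[OF subspace_ks[OF im]] by auto
  then obtain \<mu> x0 where x0: "x0 \<in> ks i" "x0 \<noteq> 0" "killing_comp i x0 x0 = \<mu> * Q x0 x0"
    and max: "\<forall>y\<in>ks i. killing_comp i y y \<le> \<mu> * Q y y"
    using bilinear_ratio_attains_max[OF bilinear_killing_comp bilinear_Q subspace_ks[OF im]] Q_pos by blast
  define H where "H x y = killing_comp i x y - \<mu> * Q x y" for x y
  have H: "bilinear H"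
    unfolding H_def bilinear_def by (simp add: linear_iff killing_comp_simps Q_simps algebra_simps)
  have radical: "H x0 y = 0" if "y \<in> ks i" for y
  proof (rule nonpos_form_radical[OF H subspace_ks[OF im] _ _ x0(1) _ that])
    show "\<forall>x\<in>ks i. \<forall>y\<in>ks i. H x y = H y x"
      using killing_comp_sym Q_sym ks_subset_k[OF im] by (simp add: H_def subset_iff)
  qed (use max x0 in \<open>auto simp: H_def\<close>)
  define R where "R = {x\<in>ks i. \<forall>y\<in>ks i. H x y = 0}"
  have "lie_ideal_of br (ks i) R"
    unfolding lie_ideal_of_def
  proof (intro conjI ballI)
    show "subspace R" unfolding R_def subspace_def using subspace_ks[OF im]
      by (auto simp: subspace_def bilinear_ladd[OF H] bilinear_lmul[OF H] bilinear_lzero[OF H])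
    show "R \<subseteq> ks i" by (auto simp: R_def)
  next
    fix x y assume x: "x \<in> ks i" and y: "y \<in> R"
    have "br x y \<in> ks i" and "br x w \<in> ks i" if "w \<in> ks i" for w
      using k_ideal_ks[OF im] x y that ks_subset_k[OF im] by (auto simp: lie_ideal_of_def R_def)
    moreover have "H (br x y) w = - H y (br x w)" for w
      using killing_comp_invariant[OF im x] Q_br_k_skew x ks_subset_k[OF im] by (auto simp: H_def)
    ultimately show "br x y \<in> R" using y by (auto simp: R_def)
  qed
  then have "R = {0} \<or> R = ks i" using simple_ideal_ks[OF i] by (auto simp: simple_lie_def)
  then have "R = ks i" using radical x0 by (auto simp: R_def)
  then show ?thesis by (auto simp: R_def H_def)
qed

lemma killing_comp_proportional:
  assumes i: "i < m" shows "\<exists>c. \<forall>x\<in>ks i. \<forall>y\<in>ks i. killing_comp i x y = c * B x y"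
proof (cases "i < r")
  case True
  then obtain \<mu> where "\<forall>x\<in>ks i. \<forall>y\<in>ks i. killing_comp i x y = \<mu> * Q x y"
    using killing_comp_proportional_simple by blast
  then have "\<forall>x\<in>ks i. \<forall>y\<in>ks i. killing_comp i x y = (- \<mu>) * B x y"
    using Q_k ks_subset_k[OF i] by auto
  then show ?thesis by blast
next
  case False
  then have "ks i = zk" using ks_cases[OF i] by auto
  then have "killing_comp i x y = 0" if "y \<in> ks i" for x y
    using that cbasis_in_comp[of i] i ks_subset_k[OF i]
    by (auto simp: killing_comp_def centre_def br_simps Q_simps intro!: sum.neutral)
  then show ?thesis by (intro exI[of _ 0]) auto
qed

lemma killing_on_kappa:
  assumes i: "i < m"
  shows "\<forall>x\<in>ks i. \<forall>y\<in>ks i. killing_on br k (ks i) x y = kappa br k (ks i) * B x y"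
proof -
  obtain c where c: "\<forall>x\<in>ks i. \<forall>y\<in>ks i. killing_on br k (ks i) x y = c * B x y"
    using killing_comp_proportional[OF i] killing_on_eq_killing_comp[OF i] by auto
  obtain x1 where x1: "x1 \<in> ks i" "x1 \<noteq> 0" using ks_nonzero[OF i] subspace_0[OF subspace_ks[OF i]] by auto
  then have B1: "B x1 x1 \<noteq> 0" using killing_neg_k ks_subset_k[OF i] by (metis less_irrefl subsetD)
  have "kappa br k (ks i) = c"
    unfolding kappa_def
  proof (rule the_equality)
    fix c2 assume "\<forall>x\<in>ks i. \<forall>y\<in>ks i. killing_on br k (ks i) x y = c2 * B x y"
    then have "c2 * B x1 x1 = c * B x1 x1" using c x1 by auto
    then show "c2 = c" using B1 by simp
  qed (rule c)
  then show ?thesis using c by simp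
qed

abbreviation kap :: "nat \<Rightarrow> real" where
  "kap i \<equiv> kappa br k (ks i)"

lemma sc_row_kk:
  assumes i: "i < m" and a: "a \<in> cbasis i"
  shows "(\<Sum>c\<in>cbasis i. \<Sum>d\<in>cbasis i. (Q (br a c) d)\<^sup>2) = kap i"
proof -
  have "a \<in> ks i" using cbasis_in_comp[OF _ a] i by simp
  moreover have "B a a = - 1" using Q_k[of a a] Q_cbasis[OF _ a a] i ks_subset_k[OF i] calculation by auto
  ultimately have "killing_comp i a a = - kap i"
    using killing_on_kappa[OF i] killing_on_eq_killing_comp[OF i] by simp
  then show ?thesis using killing_comp_diag[OF i a] by simp
qed

lemma sc_sum_kkk: "i < m \<Longrightarrow> sc_sum i i i = kap i * real (card (cbasis i))"
  unfolding sc_sum_def by (simp add: sc_row_kk)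

lemma sc_sum_kpp: "i < m \<Longrightarrow> sc_sum i m m = (1 - kap i) * real (card (cbasis i))"
  using card_ks_sc_sum sc_sum_kkk by (simp add: algebra_simps)

text \<open>The centralizer of \<open>\<pp>\<close> in \<open>\<kk>\<close> is an ideal of the simple algebra \<open>\<gg>\<close>, not all of \<open>\<gg>\<close>.\<close>
lemma k_centralizer_p_trivial: "{x\<in>k. \<forall>e\<in>p. br x e = 0} = {0}"
proof -
  define I0 where "I0 = {x\<in>k. \<forall>e\<in>p. br x e = 0}"
  have "lie_ideal_of br UNIV I0"
    unfolding lie_ideal_of_def
  proof (intro conjI ballI)
    show "subspace I0" unfolding I0_def subspace_def using subspace_k
      by (auto simp: subspace_def br_simps)
  next
    fix y x assume x: "x \<in> I0"
    have xk: "x \<in> k" using x by (auto simp: I0_def)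
    have "br (y - K y) x = 0"
      using x diff_projk_in_p br_antisym[of "y - K y" x] by (auto simp: I0_def)
    then have yx: "br y x = br (K y) x" by (simp add: br_simps)
    have "br (br (K y) x) e = 0" if e: "e \<in> p" for e
      using x e br_k_p[OF projk_in_k e] by (auto simp: I0_def br_jacobi br_simps)
    then show "br y x \<in> I0" using yx br_k_k[OF projk_in_k xk] by (auto simp: I0_def)
  qed simp
  then have "I0 = {0} \<or> I0 = UNIV" using simple by (auto simp: simple_lie_def)
  moreover have "I0 \<noteq> UNIV" using p_nontrivial k_inter_p by (auto simp: I0_def)
  ultimately show ?thesis by (simp add: I0_def)
qed

lemma sc_sum_kpp_pos: assumes i: "i < m" shows "sc_sum i m m > 0"
proof -
  have im: "i \<le> m" using i by simp
  obtain x where x: "x \<in> ks i" "x \<noteq> 0" using ks_nonzero[OF i] subspace_0[OF subspace_ks[OF i]] by auto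
  then obtain e where e: "e \<in> p" "br x e \<noteq> 0"
    using k_centralizer_p_trivial ks_subset_k[OF i] by blast
  have "\<exists>a\<in>cbasis i. \<exists>b\<in>cbasis m. br a b \<noteq> 0"
  proof (rule ccontr)
    assume "\<not> ?thesis"
    moreover have "br x e = br (\<Sum>a\<in>cbasis i. Q x a *\<^sub>R a) (\<Sum>b\<in>cbasis m. Q e b *\<^sub>R b)"
      using cproj_comp[OF im, of x] cproj_comp[of m e] x e i by (simp add: cproj_def)
    ultimately have "br x e = 0"
      by (simp add: linear_sum[OF linear_br_left] linear_sum[OF linear_br_right] br_simps)
    then show False using e by simp
  qed
  then obtain a b where a: "a \<in> cbasis i" and b: "b \<in> cbasis m" and ab: "br a b \<noteq> 0" by blast
  have row: "(\<Sum>d\<in>cbasis m. (Q (br a' b') d)\<^sup>2) = Q (br a' b') (br a' b')"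
    if "a' \<in> cbasis i" "b' \<in> cbasis m" for a' b'
  proof -
    have "br a' b' \<in> p"
      using br_k_p cbasis_in_comp[OF im that(1)] cbasis_in_comp[of m b'] that(2) i ks_subset_k[OF i] by auto
    then show ?thesis
      using Q_cproj[of m "br a' b'" "br a' b'"] cproj_comp[of m "br a' b'"] by (simp add: power2_eq_square)
  qed
  have "sc_sum i m m = (\<Sum>a'\<in>cbasis i. \<Sum>b'\<in>cbasis m. Q (br a' b') (br a' b'))"
    unfolding sc_sum_def using row by simp
  also have "\<dots> > 0"
  proof (rule sum_pos2[OF finite_cbasis[OF im] a])
    show "0 < (\<Sum>b'\<in>cbasis m. Q (br a b') (br a b'))"
      by (rule sum_pos2[OF finite_cbasis b]) (auto simp: Q_pos ab Q_nonneg)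
  qed (auto intro!: sum_nonneg simp: Q_nonneg)
  finally show ?thesis .
qed

end

section \<open>Scalar curvature and trace on \<open>\<M>\<^sub>K\<close>\<close>

definition scal_model :: "nat \<Rightarrow> (nat \<Rightarrow> real) \<Rightarrow> (nat \<Rightarrow> real) \<Rightarrow> real \<Rightarrow> (nat \<Rightarrow> real) \<Rightarrow> real" where
  "scal_model m d \<kappa> \<beta> \<alpha> =
     (\<Sum>i<m. \<kappa> i * d i / (4 * \<alpha> i) - (1 - \<kappa> i) * d i * \<alpha> i / (4 * \<beta>\<^sup>2) - (1 - \<kappa> i) * d i / \<beta>)"

context cartan_setting
begin

lemma card_cbasis_less: "i < m \<Longrightarrow> card (cbasis i) = dim (ks i)"
  and card_cbasis_m: "card (cbasis m) = dim p"
  using card_cbasis[of i] card_cbasis[of m] by simp_all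

lemma dim_p_pos: "dim p > 0"
proof -
  obtain e where "e \<in> p" "e \<noteq> 0" using p_nontrivial by blast
  then have "\<not> p \<subseteq> {0}" by blast
  then show ?thesis using dim_eq_0[of p] by (metis gr0I)
qed

lemma dim_ks_pos: "i < m \<Longrightarrow> dim (ks i) > 0"
  using ks_nonzero subspace_ks subspace_0 dim_eq_0 by blast

lemma kappa_nonneg: assumes i: "i < m" shows "kap i \<ge> 0"
proof -
  have "kap i * real (card (cbasis i)) \<ge> 0"
    unfolding sc_sum_kkk[OF i, symmetric] sc_sum_def by (intro sum_nonneg) auto
  moreover have "real (card (cbasis i)) > 0" using card_cbasis_less[OF i] dim_ks_pos[OF i] by simp
  ultimately show ?thesis by (simp add: zero_le_mult_iff)
qed

lemma kappa_less_1: assumes i: "i < m" shows "kap i < 1"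
proof -
  have "(1 - kap i) * real (card (cbasis i)) > 0" using sc_sum_kpp_pos[OF i] sc_sum_kpp[OF i] by simp
  moreover have "real (card (cbasis i)) > 0" using card_cbasis_less[OF i] dim_ks_pos[OF i] by simp
  ultimately show ?thesis by (simp add: zero_less_mult_iff)
qed

lemma sum_codim_ks: "(\<Sum>i<m. (1 - kap i) * real (dim (ks i))) = real (dim p) / 2"
proof -
  have "real (dim p) = (\<Sum>i<m. sc_sum m i m + sc_sum m m i)"
    using card_p_sc_sum card_cbasis_m by simp
  also have "\<dots> = 2 * (\<Sum>i<m. (1 - kap i) * real (dim (ks i)))"
    by (simp add: sc_sum_ppk sc_sum_pkp sc_sum_kpp card_cbasis_less sum_distrib_left mult.commute)
  finally show ?thesis by simp
qed

lemma block_weight_values: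
  assumes c0: "c0 > 0" and i: "i < m" and ci: "c i > 0"
  shows "block_weight c0 c i i i = 1 / (4 * c i)" "block_weight c0 c i m m = c i / (4 * c0\<^sup>2)"
    "block_weight c0 c m i m = c i / (4 * c0\<^sup>2)" "block_weight c0 c m m i = - 3 * c i / (4 * c0\<^sup>2) - 1 / c0"
  using c0 i ci
  by (simp_all add: block_weight_def scal_weight_def comp_weight_def comp_sign_def field_simps power2_eq_square)

lemma scal_kform:
  assumes c0: "c0 > 0" and c: "\<forall>i<m. c i > 0"
  shows "scal (kform br k ks m c0 c) br = scal_model m (\<lambda>i. real (dim (ks i))) kap c0 c"
  unfolding scal_kform_sc_sum[OF c0 c] scal_model_def
proof (intro sum.cong refl)
  fix i assume "i \<in> {..<m}"
  then have i: "i < m" and ci: "c i > 0" using c by auto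
  show "block_weight c0 c i i i * sc_sum i i i + block_weight c0 c i m m * sc_sum i m m
      + block_weight c0 c m i m * sc_sum m i m + block_weight c0 c m m i * sc_sum m m i
    = kap i * real (dim (ks i)) / (4 * c i) - (1 - kap i) * real (dim (ks i)) * c i / (4 * c0\<^sup>2)
      - (1 - kap i) * real (dim (ks i)) / c0"
    unfolding block_weight_values[of c0 i c, OF c0 i ci] sc_sum_ppk[OF i] sc_sum_pkp sc_sum_kkk[OF i]
      sc_sum_kpp[OF i] card_cbasis_less[OF i]
    using c0 ci by (simp add: field_simps power2_eq_square)
qed

lemma tr_kform:
  assumes c0: "c0 > 0" and c: "\<forall>i<m. c i > 0"
  shows "tr_wrt (kform br k ks m c0 c) (kform br k ks m t0 t)
    = t0 * real (dim p) / c0 + (\<Sum>i<m. t i * real (dim (ks i)) / c i)"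
proof -
  have "comp_weight c0 c (comp_index a) > 0" if "a \<in> abasis" for a
    using abasis_comp_index[OF that] c0 c by (auto simp: comp_weight_def)
  then interpret dm: diagonal_metric br Q abasis "\<lambda>a. comp_weight c0 c (comp_index a)"
    by unfold_locales (auto simp: bilinear_Q Q_sym abasis_onb)
  have metric: "kform br k ks m c0 c = dm.metric"
    by (intro ext) (simp add: kform_abasis dm.metric_def)
  have diag: "kform br k ks m t0 t a a = comp_weight t0 t (comp_index a)" if a: "a \<in> abasis" for a
  proof -
    have "kform br k ks m t0 t a a = (\<Sum>b\<in>abasis. if b = a then comp_weight t0 t (comp_index a) else 0)"
      unfolding kform_abasis using a by (intro sum.cong refl) (auto simp: Q_abasis)
    then show ?thesis using a finite_abasis by simp
  qed
  have "tr_wrt (kform br k ks m c0 c) (kform br k ks m t0 t)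
      = (\<Sum>a\<in>abasis. kform br k ks m t0 t a a / comp_weight c0 c (comp_index a))"
    unfolding metric by (rule dm.tr_wrt_metric[OF bilinear_kform])
  also have "\<dots> = (\<Sum>j\<le>m. \<Sum>a\<in>cbasis j. comp_weight t0 t j / comp_weight c0 c j)"
    unfolding sum_abasis
  proof (intro sum.cong refl)
    fix j a assume j: "j \<in> {..m}" and a: "a \<in> cbasis j"
    then have "a \<in> abasis" by (auto simp: abasis_def)
    then show "kform br k ks m t0 t a a / comp_weight c0 c (comp_index a) = comp_weight t0 t j / comp_weight c0 c j"
      using diag comp_index[of j a] j a by simp
  qed
  also have "\<dots> = (\<Sum>j\<le>m. real (card (cbasis j)) * (comp_weight t0 t j / comp_weight c0 c j))"
    by simp
  also have "\<dots> = t0 * real (dim p) / c0 + (\<Sum>i<m. t i * real (dim (ks i)) / c i)"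
    by (simp add: lessThan_Suc_atMost[symmetric] comp_weight_def card_cbasis_less card_cbasis_m ac_simps)
  finally show ?thesis .
qed

end

section \<open>Maximising the scalar curvature under the trace constraint\<close>

text \<open>In the variables \<open>w\<^sub>i = 1/\<alpha>\<^sub>i\<close> the trace constraint determines \<open>1/\<beta>\<close> as
  \<open>constraint_inv_beta\<close>; substituting it into \<open>scal_model\<close> gives \<open>reduced_scal\<close>
  (with \<open>kd\<^sub>i = \<kappa>\<^sub>i d\<^sub>i\<close>, \<open>cc\<^sub>i = (1 - \<kappa>\<^sub>i) d\<^sub>i\<close>, \<open>a\<^sub>i = T\<^sub>i d\<^sub>i\<close> and \<open>K = n T\<^sub>\<pp>\<close>).\<close>
definition constraint_inv_beta :: "nat \<Rightarrow> (nat \<Rightarrow> real) \<Rightarrow> real \<Rightarrow> (nat \<Rightarrow> real) \<Rightarrow> real" where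
  "constraint_inv_beta m a K w = (1 + (\<Sum>i<m. a i * w i)) / K"

definition reduced_scal ::
    "nat \<Rightarrow> (nat \<Rightarrow> real) \<Rightarrow> (nat \<Rightarrow> real) \<Rightarrow> (nat \<Rightarrow> real) \<Rightarrow> real \<Rightarrow> (nat \<Rightarrow> real) \<Rightarrow> real" where
  "reduced_scal m kd cc a K w = (\<Sum>i<m. kd i * w i / 4
     - cc i * (constraint_inv_beta m a K w)\<^sup>2 / (4 * w i) - cc i * constraint_inv_beta m a K w)"

lemma reduced_scal_term_bound:
  fixes s K kd cc a w :: real
  assumes "a * w \<le> s" "0 \<le> s" "a > 0" "w > 0" "kd \<ge> 0" "cc \<ge> 0"
  shows "kd * w - s\<^sup>2 / K\<^sup>2 * (cc / w) \<le> s * (kd / a - cc * a / K\<^sup>2)"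
proof -
  have "kd * w \<le> s * (kd / a)"
    using assms mult_left_mono[of w "s / a" kd] by (simp add: field_simps)
  moreover have "s * (cc * a) \<le> s\<^sup>2 * (cc / w)"
    using assms mult_left_mono[of "s * (a * w)" "s * s" cc] mult_left_mono[of "a * w" s s]
    by (simp add: field_simps power2_eq_square)
  then have "s * (cc * a / K\<^sup>2) \<le> s\<^sup>2 / K\<^sup>2 * (cc / w)"
    using divide_right_mono[of "s * (cc * a)" "s\<^sup>2 * (cc / w)" "K\<^sup>2"] by (simp add: field_simps)
  ultimately show ?thesis by (simp add: right_diff_distrib)
qed

lemma reduced_scal_bound:
  fixes kd cc a :: "nat \<Rightarrow> real"
  assumes K: "K > 0" and kd: "\<forall>i<m. kd i \<ge> 0" and cc: "\<forall>i<m. cc i > 0" and a: "\<forall>i<m. a i > 0"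
    and n: "(\<Sum>i<m. cc i) = n / 2" and w: "\<forall>i<m. w i > 0"
  shows "4 * reduced_scal m kd cc a K w
    \<le> - ((2 * n - (\<Sum>i<m. K * kd i / a i - cc i * a i / K)) / K) * (\<Sum>i<m. a i * w i)
      - (\<Sum>i<m. cc i / w i) / K\<^sup>2"
proof -
  define s where "s = (\<Sum>i<m. a i * w i)"
  define P where "P = (\<Sum>i<m. cc i / w i)"
  define U where "U = (1 + s) / K"
  have s0: "s \<ge> 0" unfolding s_def using a w by (intro sum_nonneg) (simp add: less_imp_le)
  have P0: "P \<ge> 0" unfolding P_def using cc w by (intro sum_nonneg) (simp add: less_imp_le)
  have n0: "n \<ge> 0" using n cc sum_nonneg[of "{..<m}" cc] by (simp add: less_imp_le)
  have "constraint_inv_beta m a K w = U" by (simp add: constraint_inv_beta_def U_def s_def)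
  then have "4 * reduced_scal m kd cc a K w = (\<Sum>i<m. kd i * w i) - U\<^sup>2 * P - 4 * U * (\<Sum>i<m. cc i)"
    unfolding reduced_scal_def P_def
    by (simp add: sum_subtractf sum_distrib_left sum_distrib_right sum_divide_distrib sum.distrib algebra_simps)
  also have "\<dots> = (\<Sum>i<m. kd i * w i) - U\<^sup>2 * P - 2 * n * U"
    using n by simp
  also have "\<dots> \<le> (\<Sum>i<m. kd i * w i) - (s\<^sup>2 / K\<^sup>2) * P - P / K\<^sup>2 - 2 * n * s / K"
  proof -
    have "(s\<^sup>2 + 1) / K\<^sup>2 \<le> U\<^sup>2"
      unfolding U_def using s0 K by (simp add: power_divide power2_eq_square field_simps)
    then have "(s\<^sup>2 + 1) / K\<^sup>2 * P \<le> U\<^sup>2 * P" using P0 by (rule mult_right_mono)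
    moreover have "2 * n * s / K \<le> 2 * n * U" using n0 K by (simp add: U_def field_simps)
    ultimately show ?thesis by (simp add: add_divide_distrib distrib_right)
  qed
  also have "\<dots> \<le> s * (\<Sum>i<m. kd i / a i - cc i * a i / K\<^sup>2) - P / K\<^sup>2 - 2 * n * s / K"
  proof -
    have "a i * w i \<le> s" if "i < m" for i
      unfolding s_def using that a w by (intro member_le_sum) (auto simp: less_imp_le)
    then have "(\<Sum>i<m. kd i * w i - s\<^sup>2 / K\<^sup>2 * (cc i / w i)) \<le> (\<Sum>i<m. s * (kd i / a i - cc i * a i / K\<^sup>2))"
      using s0 a w kd cc by (intro sum_mono reduced_scal_term_bound) (auto simp: less_imp_le)
    then show ?thesis by (simp add: P_def sum_subtractf sum_distrib_left right_diff_distrib)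
  qed
  also have "\<dots> = - ((2 * n - (\<Sum>i<m. K * kd i / a i - cc i * a i / K)) / K) * s - P / K\<^sup>2"
  proof -
    have "(\<Sum>i<m. K * kd i / a i - cc i * a i / K) = K * (\<Sum>i<m. kd i / a i - cc i * a i / K\<^sup>2)"
      unfolding sum_distrib_left using K by (intro sum.cong refl) (simp add: power2_eq_square field_simps)
    then show ?thesis using K by (simp add: field_simps)
  qed
  finally show ?thesis by (simp add: s_def P_def)
qed

lemma coercive_bound_box:
  fixes cc a w :: "nat \<Rightarrow> real"
  assumes K: "K > 0" and \<delta>: "\<delta> > 0" and cc: "\<forall>i<m. cc i > 0" and a: "\<forall>i<m. a i > 0"
    and w: "\<forall>i<m. w i > 0" and i: "i < m"
    and bound: "4 * F \<le> - \<delta> * (\<Sum>i<m. a i * w i) - (\<Sum>i<m. cc i / w i) / K\<^sup>2" and F: "F \<ge> F0"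
  shows "cc i / (4 * K\<^sup>2 * (\<bar>F0\<bar> + 1)) \<le> w i \<and> w i \<le> 4 * (\<bar>F0\<bar> + 1) / (\<delta> * a i)"
proof -
  define M where "M = \<bar>F0\<bar> + 1"
  have M: "M > 0" "- 4 * F \<le> 4 * M" using F by (auto simp: M_def)
  have aw: "a i * w i \<le> (\<Sum>i<m. a i * w i)" "0 \<le> (\<Sum>i<m. a i * w i)"
    using i a w by (auto intro!: member_le_sum sum_nonneg simp: less_imp_le)
  have cw: "cc i / w i \<le> (\<Sum>i<m. cc i / w i)" "0 \<le> (\<Sum>i<m. cc i / w i)"
    using i cc w by (auto intro!: member_le_sum sum_nonneg simp: less_imp_le)
  have q1: "\<delta> * (\<Sum>i<m. a i * w i) \<ge> 0" using \<delta> aw(2) by simp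
  have q2: "(\<Sum>i<m. cc i / w i) / K\<^sup>2 \<ge> 0" using cw(2) by simp
  have "cc i / w i / K\<^sup>2 \<le> (\<Sum>i<m. cc i / w i) / K\<^sup>2"
    using divide_right_mono[OF cw(1), of "K\<^sup>2"] by simp
  then have "cc i / w i / K\<^sup>2 \<le> 4 * M" using bound M q1 by linarith
  then have "cc i \<le> w i * (4 * K\<^sup>2 * M)" using w i K by (simp add: field_simps)
  then have lo: "cc i / (4 * K\<^sup>2 * M) \<le> w i" using K M by (simp add: pos_divide_le_eq)
  have "\<delta> * (a i * w i) \<le> \<delta> * (\<Sum>i<m. a i * w i)" using aw(1) \<delta> by simp
  then have "\<delta> * (a i * w i) \<le> 4 * M" using bound M q2 by linarith
  then have "w i \<le> 4 * M / (\<delta> * a i)" using a i \<delta> by (simp add: pos_le_divide_eq mult_ac)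
  then show ?thesis using lo by (simp add: M_def)
qed

lemma reduced_scal_cong:
  "(\<And>i. i < m \<Longrightarrow> w i = w' i) \<Longrightarrow> reduced_scal m kd cc a K w = reduced_scal m kd cc a K w'"
  unfolding reduced_scal_def constraint_inv_beta_def by simp

lemma continuous_on_reduced_scal:
  assumes "K \<noteq> 0" and "\<And>w i. w \<in> S \<Longrightarrow> i < m \<Longrightarrow> w i > 0"
  shows "continuous_on S (reduced_scal m kd cc a K)"
proof -
  have c: "continuous_on S (\<lambda>w. w i)" for i
    by (rule continuous_on_subset[OF continuous_on_product_coordinates]) simp
  have "continuous_on S (constraint_inv_beta m a K)"
    unfolding constraint_inv_beta_def using assms(1) by (intro continuous_intros c) auto
  then show ?thesis unfolding reduced_scal_def
    using assms(2) by (intro continuous_intros c) fastforce+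
qed

lemma compact_PiE_intervals:
  "compact (PiE UNIV (\<lambda>i. if i < m then {l i .. u i} else {c::real}))"
proof -
  have "compactin (product_topology (\<lambda>i. euclidean) UNIV) (PiE UNIV (\<lambda>i. if i < m then {l i .. u i} else {c}))"
    by (subst compactin_PiE) auto
  then show ?thesis by (simp add: euclidean_product_topology compactin_euclidean_iff)
qed

lemma reduced_scal_attains_max:
  fixes kd cc a :: "nat \<Rightarrow> real"
  assumes K: "K > 0" and kd: "\<forall>i<m. kd i \<ge> 0" and cc: "\<forall>i<m. cc i > 0" and a: "\<forall>i<m. a i > 0"
    and n: "(\<Sum>i<m. cc i) = n / 2" and hyp: "(\<Sum>i<m. K * kd i / a i - cc i * a i / K) < 2 * n"
  shows "\<exists>v. (\<forall>i<m. v i > 0) \<and>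
    (\<forall>w. (\<forall>i<m. w i > 0) \<longrightarrow> reduced_scal m kd cc a K w \<le> reduced_scal m kd cc a K v)"
proof -
  let ?F = "reduced_scal m kd cc a K"
  define \<delta> where "\<delta> = (2 * n - (\<Sum>i<m. K * kd i / a i - cc i * a i / K)) / K"
  have \<delta>: "\<delta> > 0" using hyp K by (simp add: \<delta>_def)
  define F0 where "F0 = ?F (\<lambda>_. 1)"
  define box where "box = PiE UNIV (\<lambda>i. if i < m
    then {cc i / (4 * K\<^sup>2 * (\<bar>F0\<bar> + 1)) .. 4 * (\<bar>F0\<bar> + 1) / (\<delta> * a i)} else {1::real})"
  have in_box: "w \<in> box" if w: "\<forall>i<m. w i > 0" "\<forall>i\<ge>m. w i = 1" "?F w \<ge> F0" for w
  proof -
    have "4 * ?F w \<le> - \<delta> * (\<Sum>i<m. a i * w i) - (\<Sum>i<m. cc i / w i) / K\<^sup>2"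
      using reduced_scal_bound[OF K kd cc a n w(1)] by (simp add: \<delta>_def)
    then show ?thesis
      using coercive_bound_box[OF K \<delta> cc a w(1) _ _ w(3)] w(2)
      by (auto simp: box_def PiE_def extensional_def Pi_def)
  qed
  have box_pos: "w i > 0" if "w \<in> box" "i < m" for w i
  proof -
    have "w i \<in> (if i < m then {cc i / (4 * K\<^sup>2 * (\<bar>F0\<bar> + 1)) .. 4 * (\<bar>F0\<bar> + 1) / (\<delta> * a i)} else {1})"
      using that(1) by (auto simp: box_def PiE_def Pi_def)
    then have "cc i / (4 * K\<^sup>2 * (\<bar>F0\<bar> + 1)) \<le> w i" using that(2) by simp
    moreover have "cc i / (4 * K\<^sup>2 * (\<bar>F0\<bar> + 1)) > 0" using cc that(2) K by simp
    ultimately show ?thesis by linarith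
  qed
  have "compact box" unfolding box_def by (rule compact_PiE_intervals)
  moreover have "(\<lambda>_. 1) \<in> box" by (rule in_box) (auto simp: F0_def)
  moreover have "continuous_on box ?F" using K box_pos by (intro continuous_on_reduced_scal) auto
  ultimately obtain v where v: "v \<in> box" "\<forall>w\<in>box. ?F w \<le> ?F v"
    using continuous_attains_sup by blast
  have "?F w \<le> ?F v" if w: "\<forall>i<m. w i > 0" for w
  proof -
    define w' where "w' i = (if i < m then w i else 1)" for i
    have "?F w' = ?F w" by (rule reduced_scal_cong) (simp add: w'_def)
    moreover have "?F w' \<le> ?F v"
    proof (cases "?F w' \<ge> F0")
      case True
      then show ?thesis using in_box[of w'] w v(2) by (auto simp: w'_def)
    next
      case False
      then show ?thesis using v \<open>(\<lambda>_. 1) \<in> box\<close> by (force simp: F0_def)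
    qed
    ultimately show ?thesis by simp
  qed
  then show ?thesis using box_pos v(1) by blast
qed

lemma scal_model_eq_reduced_scal:
  assumes \<beta>: "\<beta> > 0" and \<alpha>: "\<forall>i<m. \<alpha> i > 0" and u: "constraint_inv_beta m a K w = 1 / \<beta>"
    and w: "\<forall>i<m. w i = 1 / \<alpha> i"
  shows "scal_model m d \<kappa> \<beta> \<alpha> = reduced_scal m (\<lambda>i. \<kappa> i * d i) (\<lambda>i. (1 - \<kappa> i) * d i) a K w"
  unfolding scal_model_def reduced_scal_def u
  using \<beta> \<alpha> w by (intro sum.cong refl) (simp add: field_simps power2_eq_square)

lemma trace_constraint_iff:
  fixes d T \<alpha> :: "nat \<Rightarrow> real" and n Tp \<beta> :: real
  assumes "n > 0" "Tp > 0" "\<beta> > 0"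
  shows "- Tp * n / \<beta> + (\<Sum>i<m. T i * d i / \<alpha> i) = -1 \<longleftrightarrow>
    constraint_inv_beta m (\<lambda>i. T i * d i) (n * Tp) (\<lambda>i. 1 / \<alpha> i) = 1 / \<beta>"
  using assms by (auto simp: constraint_inv_beta_def field_simps)

lemma hypothesis_as_coercivity:
  fixes d \<kappa> T :: "nat \<Rightarrow> real" and n Tp :: real
  assumes "n > 0" "Tp > 0" "\<forall>i<m. T i > 0" "\<forall>i<m. d i > 0"
  shows "(\<Sum>i<m. (n\<^sup>2 * \<kappa> i * Tp\<^sup>2 - (d i)\<^sup>2 * (1 - \<kappa> i) * (T i)\<^sup>2) / (n * Tp * T i))
    = (\<Sum>i<m. n * Tp * (\<kappa> i * d i) / (T i * d i) - (1 - \<kappa> i) * d i * (T i * d i) / (n * Tp))"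
proof (intro sum.cong refl)
  fix i assume "i \<in> {..<m}"
  then have "T i \<noteq> 0" "d i \<noteq> 0" using assms(3,4) by auto
  then show "(n\<^sup>2 * \<kappa> i * Tp\<^sup>2 - (d i)\<^sup>2 * (1 - \<kappa> i) * (T i)\<^sup>2) / (n * Tp * T i)
      = n * Tp * (\<kappa> i * d i) / (T i * d i) - (1 - \<kappa> i) * d i * (T i * d i) / (n * Tp)"
    using assms by (simp add: field_simps power2_eq_square)
qed

lemma scal_model_attains_max:
  fixes d \<kappa> T :: "nat \<Rightarrow> real" and n Tp :: real
  assumes n: "n > 0" and d: "\<forall>i<m. d i > 0" and \<kappa>: "\<forall>i<m. 0 \<le> \<kappa> i \<and> \<kappa> i < 1"
    and codim: "(\<Sum>i<m. (1 - \<kappa> i) * d i) = n / 2" and Tp: "Tp > 0" and T: "\<forall>i<m. T i > 0"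
    and hyp: "(\<Sum>i<m. (n\<^sup>2 * \<kappa> i * Tp\<^sup>2 - (d i)\<^sup>2 * (1 - \<kappa> i) * (T i)\<^sup>2) / (n * Tp * T i)) - 2 * n < 0"
  shows "\<exists>\<beta> \<alpha>. \<beta> > 0 \<and> (\<forall>i<m. \<alpha> i > 0) \<and> - Tp * n / \<beta> + (\<Sum>i<m. T i * d i / \<alpha> i) = -1 \<and>
    (\<forall>\<beta>' \<alpha>'. \<beta>' > 0 \<longrightarrow> (\<forall>i<m. \<alpha>' i > 0) \<longrightarrow> - Tp * n / \<beta>' + (\<Sum>i<m. T i * d i / \<alpha>' i) = -1 \<longrightarrow>
       scal_model m d \<kappa> \<beta>' \<alpha>' \<le> scal_model m d \<kappa> \<beta> \<alpha>)"
proof -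
  define K where "K = n * Tp"
  define a where "a i = T i * d i" for i
  have K: "K > 0" using n Tp by (simp add: K_def)
  have a: "\<forall>i<m. a i > 0" using T d by (simp add: a_def)
  have kd: "\<forall>i<m. \<kappa> i * d i \<ge> 0" and cc: "\<forall>i<m. (1 - \<kappa> i) * d i > 0"
    using \<kappa> d by (simp_all add: less_imp_le)
  have "(\<Sum>i<m. K * (\<kappa> i * d i) / a i - (1 - \<kappa> i) * d i * a i / K) < 2 * n"
    using hyp hypothesis_as_coercivity[OF n Tp T d] by (simp add: K_def a_def)
  then obtain v where v: "\<forall>i<m. v i > 0"
    and v_max: "\<And>w. \<forall>i<m. w i > 0 \<Longrightarrow> reduced_scal m (\<lambda>i. \<kappa> i * d i) (\<lambda>i. (1 - \<kappa> i) * d i) a K w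
        \<le> reduced_scal m (\<lambda>i. \<kappa> i * d i) (\<lambda>i. (1 - \<kappa> i) * d i) a K v"
    using reduced_scal_attains_max[OF K kd cc a codim] by blast
  have constraint: "- Tp * n / \<beta> + (\<Sum>i<m. T i * d i / \<alpha> i) = -1 \<longleftrightarrow>
      constraint_inv_beta m a K (\<lambda>i. 1 / \<alpha> i) = 1 / \<beta>" if "\<beta> > 0" for \<beta> \<alpha>
    using trace_constraint_iff[OF n Tp that] by (simp add: K_def a_def[abs_def])
  define \<beta> where "\<beta> = 1 / constraint_inv_beta m a K v"
  define \<alpha> where "\<alpha> i = 1 / v i" for i
  have "(\<Sum>i<m. a i * v i) \<ge> 0" using a v by (intro sum_nonneg) (simp add: less_imp_le)
  then have \<beta>: "\<beta> > 0" using K by (simp add: \<beta>_def constraint_inv_beta_def)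
  have \<alpha>: "\<forall>i<m. \<alpha> i > 0" and v\<alpha>: "\<forall>i<m. v i = 1 / \<alpha> i" using v by (simp_all add: \<alpha>_def)
  have u: "constraint_inv_beta m a K (\<lambda>i. 1 / \<alpha> i) = 1 / \<beta>"
    unfolding \<beta>_def \<alpha>_def constraint_inv_beta_def by simp
  show ?thesis
  proof (intro exI conjI allI impI)
    show "- Tp * n / \<beta> + (\<Sum>i<m. T i * d i / \<alpha> i) = -1" using constraint[OF \<beta>] u by simp
    fix \<beta>' \<alpha>' assume \<beta>': "\<beta>' > 0" and \<alpha>': "\<forall>i<m. \<alpha>' i > 0"
      and "- Tp * n / \<beta>' + (\<Sum>i<m. T i * d i / \<alpha>' i) = -1"
    then have u': "constraint_inv_beta m a K (\<lambda>i. 1 / \<alpha>' i) = 1 / \<beta>'" using constraint by blast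
    have "scal_model m d \<kappa> \<beta>' \<alpha>'
        = reduced_scal m (\<lambda>i. \<kappa> i * d i) (\<lambda>i. (1 - \<kappa> i) * d i) a K (\<lambda>i. 1 / \<alpha>' i)"
      by (rule scal_model_eq_reduced_scal[OF \<beta>' \<alpha>' u']) simp
    also have "\<dots> \<le> reduced_scal m (\<lambda>i. \<kappa> i * d i) (\<lambda>i. (1 - \<kappa> i) * d i) a K v"
      using v_max \<alpha>' by simp
    also have "\<dots> = scal_model m d \<kappa> \<beta> \<alpha>"
      using scal_model_eq_reduced_scal[OF \<beta> \<alpha> _ v\<alpha>] by (simp add: \<beta>_def)
    finally show "scal_model m d \<kappa> \<beta>' \<alpha>' \<le> scal_model m d \<kappa> \<beta> \<alpha>" .
  qed (use \<beta> \<alpha> in auto)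
qed

theorem theorem5p5:
  fixes br :: "'g::euclidean_space \<Rightarrow> 'g \<Rightarrow> 'g" and k :: "'g set"
    and ks :: "nat \<Rightarrow> 'g set" and r m :: nat
    and Tp :: real and Tk :: "nat \<Rightarrow> real"
  assumes "lie_algebra br" and "simple_lie br UNIV" and "noncompact_lie br"
    and "cartan_subalg br k" and "k_decomp br k ks r m"
    and "Tp > 0" and "\<forall>i<m. Tk i > 0"
    and "(\<Sum>i<m. (real (dim (kperp br k)) ^ 2 * kappa br k (ks i) * Tp ^ 2
              - real (dim (ks i)) ^ 2 * (1 - kappa br k (ks i)) * Tk i ^ 2)
             / (real (dim (kperp br k)) * Tp * Tk i))
         - 2 * real (dim (kperp br k)) < 0"
  shows "\<exists>g\<in>MTminus br k ks m (kform br k ks m (- Tp) Tk).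
           \<forall>h\<in>MTminus br k ks m (kform br k ks m (- Tp) Tk). scal h br \<le> scal g br"
proof -
  interpret cartan_setting br k ks r m
    using assms(1-5) by (simp add: cartan_setting_def cartan_setting_axioms_def lie_def)
  let ?T = "kform br k ks m (- Tp) Tk"
  have tr: "tr_wrt (kform br k ks m \<beta> \<alpha>) ?T = - Tp * real (dim p) / \<beta> + (\<Sum>i<m. Tk i * real (dim (ks i)) / \<alpha> i)"
    if "\<beta> > 0" "\<forall>i<m. \<alpha> i > 0" for \<beta> \<alpha>
    using tr_kform[OF that] by simp
  obtain \<beta> \<alpha> where \<beta>: "\<beta> > 0" and \<alpha>: "\<forall>i<m. \<alpha> i > 0"
    and constraint: "- Tp * real (dim p) / \<beta> + (\<Sum>i<m. Tk i * real (dim (ks i)) / \<alpha> i) = -1"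
    and max: "\<And>\<beta>' \<alpha>'. \<beta>' > 0 \<Longrightarrow> \<forall>i<m. \<alpha>' i > 0 \<Longrightarrow>
      - Tp * real (dim p) / \<beta>' + (\<Sum>i<m. Tk i * real (dim (ks i)) / \<alpha>' i) = -1 \<Longrightarrow>
      scal_model m (\<lambda>i. real (dim (ks i))) kap \<beta>' \<alpha>' \<le> scal_model m (\<lambda>i. real (dim (ks i))) kap \<beta> \<alpha>"
    using scal_model_attains_max[of "real (dim p)" m "\<lambda>i. real (dim (ks i))" kap Tp Tk] assms(6-8)
      dim_p_pos dim_ks_pos kappa_nonneg kappa_less_1 sum_codim_ks by (auto simp: power2_eq_square)
  show ?thesis
  proof (intro bexI ballI)
    show "kform br k ks m \<beta> \<alpha> \<in> MTminus br k ks m ?T"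
      using \<beta> \<alpha> constraint tr[OF \<beta> \<alpha>] by (auto simp: MTminus_def MK_def)
    fix h assume "h \<in> MTminus br k ks m ?T"
    then obtain \<beta>' \<alpha>' where h: "h = kform br k ks m \<beta>' \<alpha>'" and \<beta>': "\<beta>' > 0" and \<alpha>': "\<forall>i<m. \<alpha>' i > 0"
      and "tr_wrt h ?T = -1" by (auto simp: MTminus_def MK_def)
    then show "scal h br \<le> scal (kform br k ks m \<beta> \<alpha>) br"
      using max[OF \<beta>' \<alpha>'] tr[OF \<beta>' \<alpha>'] scal_kform[OF \<beta>' \<alpha>'] scal_kform[OF \<beta> \<alpha>] by simp
  qed
qed

end
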